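(* Let $d$ be a positive integer with $d\equiv 0\pmod 4$, put $d'=d/4$, let $k$ be a rational and $\varepsilon$ a positive real such that $$2\le k<2+\frac{1}{2d'-1}\qquad\text{and}\qquad \varepsilon\sum_{j=0}^{d'-2}(k-1)^{2j+2}+\varepsilon\cdot\frac{k-1+\varepsilon}{k+\varepsilon}\ \ge\ \frac{1}{k+\varepsilon}.$$ If $G$ is a fractionally $k$-colorable graph and $W\subseteq V(G)$ is a set of vertices at pairwise distance at least $d$, then every fractional $(k+\varepsilon)$-precoloring of $W$ extends to a fractional $(k+\varepsilon)$-coloring of $G$.
   Context: A fractional $m$-coloring of a graph (real $m>0$) assigns to each vertex a measurable subset of $[0,m)$ of Lebesgue measure one so that adjacent vertices receive disjoint sets; a graph is fractionally $k$-colorable if it has a fractional $k$-coloring. A fractional $m$-precoloring of a vertex set $W$ assigns measurable subsets of $[0,m)$ of measure one to the vertices of $W$; it extends if some fractional $m$-coloring of the whole graph agrees with it on $W$. Graphs are finite. *)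

theory Defs
  imports "HOL-Analysis.Analysis"
begin

definition graph :: "'a set \<Rightarrow> ('a \<Rightarrow> 'a \<Rightarrow> bool) \<Rightarrow> bool" where
  "graph V E \<longleftrightarrow> finite V \<and> (\<forall>u v. E u v \<longrightarrow> u \<in> V \<and> v \<in> V)
     \<and> (\<forall>u v. E u v \<longrightarrow> E v u) \<and> (\<forall>u. \<not> E u u)"

definition unit_set :: "real \<Rightarrow> real set \<Rightarrow> bool" where
  "unit_set m S \<longleftrightarrow> S \<in> sets lebesgue \<and> S \<subseteq> {0..<m} \<and> emeasure lebesgue S = 1"

definition frac_coloring :: "'a set \<Rightarrow> ('a \<Rightarrow> 'a \<Rightarrow> bool) \<Rightarrow> real \<Rightarrow> ('a \<Rightarrow> real set) \<Rightarrow> bool" where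
  "frac_coloring V E m c \<longleftrightarrow> (\<forall>v\<in>V. unit_set m (c v))
     \<and> (\<forall>u\<in>V. \<forall>v\<in>V. E u v \<longrightarrow> c u \<inter> c v = {})"

definition frac_colorable :: "'a set \<Rightarrow> ('a \<Rightarrow> 'a \<Rightarrow> bool) \<Rightarrow> real \<Rightarrow> bool" where
  "frac_colorable V E k \<longleftrightarrow> (\<exists>c. frac_coloring V E k c)"

definition frac_precoloring :: "'a set \<Rightarrow> real \<Rightarrow> ('a \<Rightarrow> real set) \<Rightarrow> bool" where
  "frac_precoloring W m c \<longleftrightarrow> (\<forall>w\<in>W. unit_set m (c w))"

definition precoloring_extends ::
  "'a set \<Rightarrow> ('a \<Rightarrow> 'a \<Rightarrow> bool) \<Rightarrow> real \<Rightarrow> 'a set \<Rightarrow> ('a \<Rightarrow> real set) \<Rightarrow> bool" where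
  "precoloring_extends V E m W c \<longleftrightarrow> (\<exists>c'. frac_coloring V E m c' \<and> (\<forall>w\<in>W. c' w = c w))"

text \<open>Vertices at pairwise distance at least d: no walk of length < d joins two
distinct vertices of W (walks of length n are given by the n-th relation power).\<close>
definition pairwise_far :: "('a \<Rightarrow> 'a \<Rightarrow> bool) \<Rightarrow> 'a set \<Rightarrow> nat \<Rightarrow> bool" where
  "pairwise_far E W d \<longleftrightarrow> (\<forall>u\<in>W. \<forall>v\<in>W. u \<noteq> v \<longrightarrow> (\<forall>n<d. \<not> (E ^^ n) u v))"

end

theory Submission
  imports Defs
begin

text \<open>
  Let \<open>G\<close> be fractionally \<open>k\<close>-colourable, \<open>m = k + \<epsilon>\<close>, and let the vertices of \<open>W\<close>, precoloured by unit
  subsets of \<open>[0, m)\<close>, be at distance at least \<open>4 * D\<close>. Inside \<open>[0, m)\<close> we fix a region \<open>K\<close> of measure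
  \<open>k\<close> meeting each precolour set in measure \<open>k / m\<close>. Around every \<open>w \<in> W\<close> we place \<open>2 * D\<close> disjoint strips
  in \<open>K\<close> (odd ones inside \<open>c w\<close>, even ones outside) and realise a fractional \<open>k\<close>-colouring \<open>\<psi>\<close> in \<open>K\<close>
  that meets every strip proportionally. A vertex at distance \<open>i < 2 * D\<close> from \<open>w\<close> receives the strips
  above \<open>i\<close> of parity opposite to \<open>i\<close>, its \<open>\<psi>\<close>-share of the strips below \<open>i\<close>, and on odd layers
  the spare room \<open>[0, m) - K\<close>; all other vertices receive \<open>\<psi>\<close>. Since \<open>k < 2 + 1 / (2 * D - 1)\<close> excludes
  short odd cycles, adjacent vertices lie on consecutive layers, which receive disjoint sets.
\<close>

subsection \<open>Measure toolkit\<close>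

lemma lmeasurable_in_interval:
  fixes A :: "real set"
  shows "A \<in> sets lebesgue \<Longrightarrow> A \<subseteq> {a..<b} \<Longrightarrow> A \<in> lmeasurable"
  by (rule bounded_set_imp_lmeasurable[OF bounded_subset[OF bounded_Ico]])

text \<open>Intermediate values of Lebesgue measure: a bounded measurable set of reals contains measurable
  subsets of every smaller measure, since the measure of \<open>A \<inter> {..x}\<close> is 1-Lipschitz in \<open>x\<close>.\<close>
lemma measurable_subset_of_measure:
  fixes A :: "real set"
  assumes A: "A \<in> sets lebesgue" "bounded A" and t: "0 \<le> t" "t \<le> measure lebesgue A"
  shows "\<exists>B. B \<in> sets lebesgue \<and> B \<subseteq> A \<and> measure lebesgue B = t"
proof (cases "t = 0")
  case True
  then show ?thesis by (intro exI[of _ "{}"]) auto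
next
  case False
  obtain a where a: "A \<subseteq> {-a..a}"
    using bounded_subset_cbox_symmetric[OF A(2)] by auto
  define f where "f x = measure lebesgue (A \<inter> {..x})" for x
  have lmeas: "A \<inter> S \<in> lmeasurable" if "S \<in> sets lebesgue" for S
    using A that by (intro bounded_set_imp_lmeasurable bounded_subset[OF A(2)]) auto
  have increment: "f y = f x + measure lebesgue (A \<inter> {x<..y})" if "x \<le> y" for x y
  proof -
    have split: "A \<inter> {..y} = (A \<inter> {..x}) \<union> (A \<inter> {x<..y})" using that by auto
    have "(A \<inter> {..x}) \<inter> (A \<inter> {x<..y}) = {}" by auto
    then show ?thesis
      unfolding f_def split using measure_Un3[OF lmeas[of "{..x}"] lmeas[of "{x<..y}"]] by (simp only: measure_empty) simp
  qed
  have lipschitz: "0 \<le> f y - f x \<and> f y - f x \<le> y - x" if "x \<le> y" for x y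
  proof -
    have "measure lebesgue (A \<inter> {x<..y}) \<le> measure lebesgue {x<..y}"
      by (rule measure_mono_fmeasurable) (auto simp: A(1) bounded_set_imp_lmeasurable)
    then show ?thesis using increment[OF that] that by simp
  qed
  have "dist (f x) (f y) \<le> 1 * dist x y" for x y
    using lipschitz[of x y] lipschitz[of y x] by (cases "x \<le> y") (auto simp: dist_real_def)
  then have cont: "continuous_on {-a..a} f"
    by (intro lipschitz_on_continuous_on[of 1] lipschitz_onI) auto
  have "f (-a) \<le> measure lebesgue {-a..-a}"
    unfolding f_def using a
    by (intro measure_mono_fmeasurable) (auto simp: A(1) bounded_set_imp_lmeasurable)
  then have low: "f (-a) \<le> t" using t by simp
  have "A \<inter> {..a} = A" using a by auto
  then have high: "t \<le> f a" using t by (simp add: f_def)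
  have "A \<noteq> {}"
  proof
    assume "A = {}"
    then show False using False t by simp
  qed
  then obtain x where "x \<in> {-a..a}" using a by blast
  then have "-a \<le> a" by simp
  from IVT'[of f "-a" t a, OF low high this cont] obtain x where "f x = t" by blast
  then show ?thesis using A(1) unfolding f_def by (intro exI[of _ "A \<inter> {..x}"]) auto
qed

lemma disjoint_subsets_of_measures:
  fixes \<tau> :: "'i \<Rightarrow> real" and A :: "real set"
  assumes "finite I" and A: "A \<in> sets lebesgue" "bounded A"
    and \<tau>: "\<forall>i\<in>I. 0 \<le> \<tau> i" "(\<Sum>i\<in>I. \<tau> i) \<le> measure lebesgue A"
  shows "\<exists>P. (\<forall>i\<in>I. P i \<in> sets lebesgue \<and> P i \<subseteq> A \<and> measure lebesgue (P i) = \<tau> i)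
              \<and> disjoint_family_on P I"
  using assms
proof (induction I arbitrary: A rule: finite_induct)
  case empty
  then show ?case by (auto simp: disjoint_family_on_def)
next
  case (insert j I)
  have total: "\<tau> j + (\<Sum>i\<in>I. \<tau> i) \<le> measure lebesgue A" using insert by simp
  moreover have "(\<Sum>i\<in>I. \<tau> i) \<ge> 0" using insert by (simp add: sum_nonneg)
  ultimately obtain B where B: "B \<in> sets lebesgue" "B \<subseteq> A" "measure lebesgue B = \<tau> j"
    using measurable_subset_of_measure[OF insert.prems(1,2), of "\<tau> j"] insert.prems(3) by auto
  have "A \<in> lmeasurable" using insert.prems(1,2) by (simp add: bounded_set_imp_lmeasurable)
  then have "measure lebesgue (A - B) = measure lebesgue A - \<tau> j"
    using B by (subst measure_Diff) (auto simp: fmeasurable_def)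
  then have "(\<Sum>i\<in>I. \<tau> i) \<le> measure lebesgue (A - B)" using total by simp
  moreover have "A - B \<in> sets lebesgue" "bounded (A - B)"
    using B insert.prems(1,2) bounded_subset[of A "A - B"] by auto
  ultimately obtain P where
    P: "\<forall>i\<in>I. P i \<in> sets lebesgue \<and> P i \<subseteq> A - B \<and> measure lebesgue (P i) = \<tau> i"
       "disjoint_family_on P I"
    using insert.IH[of "A - B"] insert.prems(3) by auto
  define P' where "P' = P(j := B)"
  have "\<forall>i\<in>insert j I. P' i \<in> sets lebesgue \<and> P' i \<subseteq> A \<and> measure lebesgue (P' i) = \<tau> i"
    using P B insert.hyps(2) by (auto simp: P'_def)
  moreover have "disjoint_family_on P' (insert j I)"
    using P insert.hyps(2) unfolding disjoint_family_on_def P'_def by auto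
  ultimately show ?case by blast
qed

definition venn_region :: "'i set \<Rightarrow> ('i \<Rightarrow> 'b set) \<Rightarrow> 'b set \<Rightarrow> 'i set \<Rightarrow> 'b set" where
  "venn_region I F A J = {x\<in>A. \<forall>i\<in>I. x \<in> F i \<longleftrightarrow> i \<in> J}"

lemma venn_region_subset: "venn_region I F A J \<subseteq> A"
  by (auto simp: venn_region_def)

lemma venn_region_disjoint:
  assumes "J \<subseteq> I" "J' \<subseteq> I" "J \<noteq> J'"
  shows "venn_region I F A J \<inter> venn_region I F A J' = {}"
  using assms unfolding venn_region_def by blast

lemma venn_region_sets:
  assumes "finite I" "A \<in> sets lebesgue" "\<forall>i\<in>I. F i \<in> sets lebesgue"
  shows "venn_region I F A J \<in> sets lebesgue"
proof -
  have "venn_region I F A J = A - (\<Union>i\<in>I \<inter> J. A - F i) - (\<Union>i\<in>I - J. F i)"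
    unfolding venn_region_def by blast
  also have "\<dots> \<in> sets lebesgue"
    by (intro sets.Diff sets.finite_UN) (use assms in auto)
  finally show ?thesis .
qed

lemma venn_region_of_point: "x \<in> A \<Longrightarrow> x \<in> venn_region I F A {i\<in>I. x \<in> F i}"
  unfolding venn_region_def by blast

lemma venn_regions_cover:
  "A = (\<Union>J\<in>Pow I. venn_region I F A J)"
  "i \<in> I \<Longrightarrow> A \<inter> F i = (\<Union>J\<in>{J\<in>Pow I. i \<in> J}. venn_region I F A J)"
proof -
  have point: "x \<in> (\<Union>J\<in>{J\<in>Pow I. P J}. venn_region I F A J)"
    if "x \<in> A" "P {j\<in>I. x \<in> F j}" for x P
    using that venn_region_of_point[OF that(1), of I F] by (intro UN_I[of "{j\<in>I. x \<in> F j}"]) auto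
  show "A = (\<Union>J\<in>Pow I. venn_region I F A J)"
  proof
    show "A \<subseteq> (\<Union>J\<in>Pow I. venn_region I F A J)"
      using point[where P = "\<lambda>_. True"] by auto
  qed (intro UN_least venn_region_subset)
  assume "i \<in> I"
  show "A \<inter> F i = (\<Union>J\<in>{J\<in>Pow I. i \<in> J}. venn_region I F A J)"
  proof
    show "A \<inter> F i \<subseteq> (\<Union>J\<in>{J\<in>Pow I. i \<in> J}. venn_region I F A J)"
      using point[where P = "\<lambda>J. i \<in> J"] \<open>i \<in> I\<close> by auto
    show "(\<Union>J\<in>{J\<in>Pow I. i \<in> J}. venn_region I F A J) \<subseteq> A \<inter> F i"
      using \<open>i \<in> I\<close> unfolding venn_region_def by (intro UN_least) auto
  qed
qed

lemma measure_UN_venn: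
  fixes Y :: "'i set \<Rightarrow> real set"
  assumes "finite I" "G \<subseteq> Pow I" "bounded A"
    and Y: "\<And>J. J \<in> G \<Longrightarrow> Y J \<in> sets lebesgue \<and> Y J \<subseteq> venn_region I F A J"
  shows "measure lebesgue (\<Union>J\<in>G. Y J) = (\<Sum>J\<in>G. measure lebesgue (Y J))"
proof (rule measure_UNION')
  show "finite G" using assms(1,2) by (meson finite_Pow_iff finite_subset)
  show "Y J \<in> lmeasurable" if "J \<in> G" for J
    using Y[OF that] venn_region_subset[of I F A J] assms(3)
    by (intro bounded_set_imp_lmeasurable) (auto intro: bounded_subset)
  show "pairwise (\<lambda>J J'. disjnt (Y J) (Y J')) G"
  proof (rule pairwiseI)
    fix J J' assume "J \<in> G" "J' \<in> G" "J \<noteq> J'"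
    then have "venn_region I F A J \<inter> venn_region I F A J' = {}"
      using assms(2) by (intro venn_region_disjoint) auto
    then show "disjnt (Y J) (Y J')" using Y \<open>J \<in> G\<close> \<open>J' \<in> G\<close> unfolding disjnt_def by blast
  qed
qed

lemma measure_venn_proportional:
  fixes Q :: "'i set \<Rightarrow> real set"
  assumes I: "finite I" "\<forall>i\<in>I. F i \<in> sets lebesgue" and A: "A \<in> sets lebesgue" "bounded A"
    and Q: "\<And>J. J \<in> Pow I \<Longrightarrow> Q J \<in> sets lebesgue \<and> Q J \<subseteq> venn_region I F A J
              \<and> measure lebesgue (Q J) = r * measure lebesgue (venn_region I F A J)"
  shows "measure lebesgue (\<Union>J\<in>Pow I. Q J) = r * measure lebesgue A"
    and "i \<in> I \<Longrightarrow> measure lebesgue ((\<Union>J\<in>Pow I. Q J) \<inter> F i) = r * measure lebesgue (A \<inter> F i)"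
proof -
  have venn_sets: "venn_region I F A J \<in> sets lebesgue" for J
    using venn_region_sets[OF I(1) A(1) I(2)] .
  have sum: "measure lebesgue (\<Union>J\<in>G. Q J) = r * measure lebesgue (\<Union>J\<in>G. venn_region I F A J)"
    if G: "G \<subseteq> Pow I" for G
  proof -
    have "measure lebesgue (\<Union>J\<in>G. Q J) = (\<Sum>J\<in>G. measure lebesgue (Q J))"
      using Q G by (intro measure_UN_venn[OF I(1) G A(2)]) auto
    also have "\<dots> = r * (\<Sum>J\<in>G. measure lebesgue (venn_region I F A J))"
      using Q G by (auto simp: sum_distrib_left intro!: sum.cong)
    also have "(\<Sum>J\<in>G. measure lebesgue (venn_region I F A J))
        = measure lebesgue (\<Union>J\<in>G. venn_region I F A J)"
      using venn_sets by (intro measure_UN_venn[OF I(1) G A(2), symmetric]) auto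
    finally show ?thesis .
  qed
  show "measure lebesgue (\<Union>J\<in>Pow I. Q J) = r * measure lebesgue A"
    using sum[of "Pow I"] venn_regions_cover(1)[of A I F] by simp
  assume i: "i \<in> I"
  have "(\<Union>J\<in>Pow I. Q J) \<inter> F i = (\<Union>J\<in>{J\<in>Pow I. i \<in> J}. Q J)"
  proof -
    have "Q J \<subseteq> F i \<longleftrightarrow> i \<in> J" "Q J \<inter> F i = {} \<longleftrightarrow> i \<notin> J" if "J \<in> Pow I" "Q J \<noteq> {}" for J
      using Q[OF that(1)] that(2) i unfolding venn_region_def by blast+
    then show ?thesis by blast
  qed
  then show "measure lebesgue ((\<Union>J\<in>Pow I. Q J) \<inter> F i) = r * measure lebesgue (A \<inter> F i)"
    using sum[of "{J\<in>Pow I. i \<in> J}"] venn_regions_cover(2)[OF i, of A F] by auto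
qed

lemma proportional_split:
  fixes F :: "'i \<Rightarrow> real set" and \<rho> :: "'x \<Rightarrow> real"
  assumes I: "finite I" "\<forall>i\<in>I. F i \<in> sets lebesgue" and X: "finite X"
    and A: "A \<in> sets lebesgue" "bounded A"
    and \<rho>: "\<forall>x\<in>X. 0 \<le> \<rho> x" "(\<Sum>x\<in>X. \<rho> x) \<le> 1"
  shows "\<exists>P. (\<forall>x\<in>X. P x \<in> sets lebesgue \<and> P x \<subseteq> A
              \<and> measure lebesgue (P x) = \<rho> x * measure lebesgue A
              \<and> (\<forall>i\<in>I. measure lebesgue (P x \<inter> F i) = \<rho> x * measure lebesgue (A \<inter> F i)))
            \<and> disjoint_family_on P X"
proof -
  let ?V = "venn_region I F A"
  have "\<exists>Q. (\<forall>x\<in>X. Q x \<in> sets lebesgue \<and> Q x \<subseteq> ?V J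
            \<and> measure lebesgue (Q x) = \<rho> x * measure lebesgue (?V J)) \<and> disjoint_family_on Q X" for J
  proof (rule disjoint_subsets_of_measures[OF X])
    show "?V J \<in> sets lebesgue" using venn_region_sets[OF I(1) A(1) I(2)] .
    show "bounded (?V J)" using bounded_subset[OF A(2) venn_region_subset] .
    show "\<forall>x\<in>X. 0 \<le> \<rho> x * measure lebesgue (?V J)" using \<rho>(1) by simp
    have "(\<Sum>x\<in>X. \<rho> x * measure lebesgue (?V J)) = (\<Sum>x\<in>X. \<rho> x) * measure lebesgue (?V J)"
      by (simp add: sum_distrib_right)
    also have "\<dots> \<le> measure lebesgue (?V J)"
      using \<rho>(2) by (intro mult_left_le_one_le) (auto intro: sum_nonneg \<rho>(1)[rule_format])
    finally show "(\<Sum>x\<in>X. \<rho> x * measure lebesgue (?V J)) \<le> measure lebesgue (?V J)" .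
  qed
  then obtain Q where Q: "\<And>J x. x \<in> X \<Longrightarrow> Q J x \<in> sets lebesgue \<and> Q J x \<subseteq> ?V J
            \<and> measure lebesgue (Q J x) = \<rho> x * measure lebesgue (?V J)"
      and Q_disj: "\<And>J. disjoint_family_on (Q J) X"
    by metis
  define P where "P x = (\<Union>J\<in>Pow I. Q J x)" for x
  have "P x \<in> sets lebesgue" if "x \<in> X" for x
    unfolding P_def using Q[OF that] I(1) by (intro sets.finite_UN) auto
  moreover have "P x \<subseteq> A" if "x \<in> X" for x
    unfolding P_def using Q[OF that] venn_region_subset[of I F A] by blast
  moreover have "measure lebesgue (P x) = \<rho> x * measure lebesgue A"
    "\<forall>i\<in>I. measure lebesgue (P x \<inter> F i) = \<rho> x * measure lebesgue (A \<inter> F i)" if "x \<in> X" for x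
    using measure_venn_proportional[OF I A, of "\<lambda>J. Q J x"] Q[OF that] unfolding P_def by auto
  moreover have "disjoint_family_on P X"
    unfolding disjoint_family_on_def
  proof (intro ballI impI)
    fix x y assume xy: "x \<in> X" "y \<in> X" "x \<noteq> y"
    have "Q J x \<inter> Q J' y = {}" if "J \<in> Pow I" "J' \<in> Pow I" for J J'
    proof (cases "J = J'")
      case True
      then show ?thesis using Q_disj[of J] xy unfolding disjoint_family_on_def by blast
    next
      case False
      then show ?thesis using Q[OF xy(1), of J] Q[OF xy(2), of J'] that venn_region_disjoint[of J I J' F A]
        by blast
    qed
    then show "P x \<inter> P y = {}" unfolding P_def by blast
  qed
  ultimately show ?thesis by blast
qed

subsection \<open>Fractional colourings and odd cycles\<close>

lemma unit_setD:
  assumes "unit_set m S"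
  shows "S \<in> sets lebesgue" "S \<subseteq> {0..<m}" "measure lebesgue S = 1"
  using assms unfolding unit_set_def by (auto intro: measure_eq_emeasure_eq_ennreal)

definition independent_set :: "('a \<Rightarrow> 'a \<Rightarrow> bool) \<Rightarrow> 'a set \<Rightarrow> bool" where
  "independent_set E X \<longleftrightarrow> (\<forall>u\<in>X. \<forall>x\<in>X. \<not> E u x)"

text \<open>The weight of an independent set \<open>X\<close> is the measure of the colours used exactly by \<open>X\<close>.\<close>
lemma independent_set_weights:
  assumes G: "graph V E" and col: "frac_colorable V E k" and k: "0 \<le> k"
  shows "\<exists>Ind \<mu>. finite Ind \<and> Ind \<subseteq> Pow V \<and> (\<forall>X\<in>Ind. independent_set E X)
     \<and> (\<forall>X. \<mu> X \<ge> (0::real)) \<and> (\<Sum>X\<in>Ind. \<mu> X) = k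
     \<and> (\<forall>v\<in>V. (\<Sum>X\<in>{X\<in>Ind. v \<in> X}. \<mu> X) = 1)"
proof -
  obtain \<phi> where \<phi>: "frac_coloring V E k \<phi>" using col unfolding frac_colorable_def by blast
  have finV: "finite V" using G unfolding graph_def by blast
  have \<phi>_unit: "\<phi> v \<in> sets lebesgue" "\<phi> v \<subseteq> {0..<k}" "measure lebesgue (\<phi> v) = 1" if "v \<in> V" for v
    using \<phi> that unit_setD unfolding frac_coloring_def by blast+
  let ?B = "{0..<k}"
  define \<mu> where "\<mu> X = measure lebesgue (venn_region V \<phi> ?B X)" for X
  define Ind where "Ind = {X\<in>Pow V. independent_set E X}"
  have venn_sets: "venn_region V \<phi> ?B X \<in> sets lebesgue" for X
    using \<phi>_unit by (intro venn_region_sets finV) auto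
  have sum_venn: "(\<Sum>X\<in>G. \<mu> X) = measure lebesgue (\<Union>X\<in>G. venn_region V \<phi> ?B X)" if "G \<subseteq> Pow V" for G
    unfolding \<mu>_def using venn_sets by (intro measure_UN_venn[OF finV that bounded_Ico, symmetric]) auto
  have dependent_null: "\<mu> X = 0" if X: "X \<in> Pow V" "X \<notin> Ind" for X
  proof -
    obtain u x where ux: "u \<in> X" "x \<in> X" "E u x"
      using X unfolding Ind_def independent_set_def by blast
    then have "\<phi> u \<inter> \<phi> x = {}" using \<phi> X(1) unfolding frac_coloring_def by blast
    then have "venn_region V \<phi> ?B X = {}" using ux X(1) unfolding venn_region_def by blast
    then show ?thesis unfolding \<mu>_def by simp
  qed
  have restrict: "(\<Sum>X\<in>{X\<in>Ind. P X}. \<mu> X) = (\<Sum>X\<in>{X\<in>Pow V. P X}. \<mu> X)" for P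
    using dependent_null finV by (intro sum.mono_neutral_left) (auto simp: Ind_def)
  have "(\<Sum>X\<in>Ind. \<mu> X) = k"
    using restrict[of "\<lambda>_. True"] sum_venn[of "Pow V"] venn_regions_cover(1)[of ?B V \<phi>] k
    by (simp add: Ind_def Pow_def)
  moreover have "(\<Sum>X\<in>{X\<in>Ind. v \<in> X}. \<mu> X) = 1" if v: "v \<in> V" for v
  proof -
    have "?B \<inter> \<phi> v = \<phi> v" using \<phi>_unit(2)[OF v] by blast
    then show ?thesis
      using restrict[of "\<lambda>X. v \<in> X"] sum_venn[of "{X\<in>Pow V. v \<in> X}"] \<phi>_unit(3)[OF v]
        venn_regions_cover(2)[OF v, of ?B \<phi>] by auto
  qed
  moreover have "finite Ind" "Ind \<subseteq> Pow V" "\<forall>X\<in>Ind. independent_set E X"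
    using finV unfolding Ind_def by auto
  moreover have "\<forall>X. \<mu> X \<ge> 0" unfolding \<mu>_def by simp
  ultimately show ?thesis by blast
qed

text \<open>A fractional \<open>k\<close>-colouring can be realised inside any set \<open>K\<close> of measure \<open>k\<close> so that every
  colour set meets each member of a given finite family of sets \<open>U i\<close> in exactly the share
  \<open>measure (K \<inter> U i) / k\<close>: each independent set receives a proportional slice of \<open>K\<close>.\<close>
lemma uniform_fractional_coloring:
  fixes U :: "'i \<Rightarrow> real set"
  assumes G: "graph V E" and col: "frac_colorable V E k" and k: "0 < k"
    and K: "K \<in> sets lebesgue" "bounded K" "measure lebesgue K = k"
    and U: "finite I" "\<forall>i\<in>I. U i \<in> sets lebesgue"
  shows "\<exists>\<psi>. (\<forall>v\<in>V. \<psi> v \<in> sets lebesgue \<and> \<psi> v \<subseteq> K \<and> measure lebesgue (\<psi> v) = 1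
            \<and> (\<forall>i\<in>I. measure lebesgue (\<psi> v \<inter> U i) = measure lebesgue (K \<inter> U i) / k))
           \<and> (\<forall>u\<in>V. \<forall>x\<in>V. E u x \<longrightarrow> \<psi> u \<inter> \<psi> x = {})"
proof -
  obtain Ind \<mu> where Ind: "finite Ind" "\<forall>X\<in>Ind. independent_set E X"
    and \<mu>: "\<forall>X. \<mu> X \<ge> (0::real)" "(\<Sum>X\<in>Ind. \<mu> X) = k" "\<forall>v\<in>V. (\<Sum>X\<in>{X\<in>Ind. v \<in> X}. \<mu> X) = 1"
    using independent_set_weights[OF G col] k by auto
  have "\<forall>X\<in>Ind. 0 \<le> \<mu> X / k" "(\<Sum>X\<in>Ind. \<mu> X / k) \<le> 1"
    using \<mu> k by (auto simp: sum_divide_distrib[symmetric])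
  from proportional_split[OF U Ind(1) K(1,2) this] obtain P
    where P: "\<forall>X\<in>Ind. P X \<in> sets lebesgue \<and> P X \<subseteq> K \<and> measure lebesgue (P X) = \<mu> X / k * measure lebesgue K
              \<and> (\<forall>i\<in>I. measure lebesgue (P X \<inter> U i) = \<mu> X / k * measure lebesgue (K \<inter> U i))"
      and P_disj: "disjoint_family_on P Ind"
    by blast
  define \<psi> where "\<psi> v = (\<Union>X\<in>{X\<in>Ind. v \<in> X}. P X)" for v
  have measure_\<psi>: "measure lebesgue (\<psi> v \<inter> C) = (\<Sum>X\<in>{X\<in>Ind. v \<in> X}. measure lebesgue (P X \<inter> C))"
    if "C \<in> sets lebesgue" for v C
  proof -
    have "\<psi> v \<inter> C = (\<Union>X\<in>{X\<in>Ind. v \<in> X}. P X \<inter> C)" unfolding \<psi>_def by blast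
    also have "measure lebesgue \<dots> = (\<Sum>X\<in>{X\<in>Ind. v \<in> X}. measure lebesgue (P X \<inter> C))"
    proof (rule measure_UNION')
      show "P X \<inter> C \<in> lmeasurable" if "X \<in> {X\<in>Ind. v \<in> X}" for X
        using P that \<open>C \<in> sets lebesgue\<close> K(2)
        by (intro bounded_set_imp_lmeasurable) (auto intro: bounded_subset)
      show "pairwise (\<lambda>X Y. disjnt (P X \<inter> C) (P Y \<inter> C)) {X\<in>Ind. v \<in> X}"
        using P_disj unfolding pairwise_def disjnt_def disjoint_family_on_def by blast
    qed (use Ind(1) in simp)
    finally show ?thesis .
  qed
  have "\<psi> v \<in> sets lebesgue" "\<psi> v \<subseteq> K" for v
    unfolding \<psi>_def using P Ind(1) by (auto intro!: sets.finite_UN)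
  moreover have "measure lebesgue (\<psi> v) = 1" if "v \<in> V" for v
    using measure_\<psi>[of UNIV v] P \<mu>(3) that K(3) k by simp
  moreover have "measure lebesgue (\<psi> v \<inter> U i) = measure lebesgue (K \<inter> U i) / k"
    if "v \<in> V" "i \<in> I" for v i
  proof -
    have "measure lebesgue (\<psi> v \<inter> U i)
        = (\<Sum>X\<in>{X\<in>Ind. v \<in> X}. \<mu> X) * measure lebesgue (K \<inter> U i) / k"
      using measure_\<psi>[of "U i" v] U(2) P that(2)
      by (simp add: sum_distrib_right sum_divide_distrib)
    then show ?thesis using \<mu>(3) that(1) by simp
  qed
  moreover have "\<psi> u \<inter> \<psi> x = {}" if "E u x" for u x
  proof -
    have "X \<noteq> Y" if "X \<in> Ind" "Y \<in> Ind" "u \<in> X" "x \<in> Y" for X Y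
      using Ind(2) that \<open>E u x\<close> unfolding independent_set_def by blast
    then show ?thesis using P_disj unfolding \<psi>_def disjoint_family_on_def by blast
  qed
  ultimately show ?thesis by blast
qed

text \<open>On a closed walk of odd length \<open>2 * i + 1\<close> an independent set occupies at most \<open>i\<close>
  positions, since the successor of an occupied position is unoccupied.\<close>
lemma independent_positions_on_odd_closed_walk:
  fixes f :: "nat \<Rightarrow> 'a"
  assumes n: "n = 2 * i + 1" and closed: "f n = f 0" and walk: "\<forall>s<n. E (f s) (f (Suc s))"
    and X: "independent_set E X"
  shows "card {s. s < n \<and> f s \<in> X} \<le> i"
proof -
  define P where "P = {s. s < n \<and> f s \<in> X}"
  define g where "g s = (Suc s) mod n" for s
  have g: "g s = (if Suc s = n then 0 else Suc s)" if "s < n" for s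
    using that unfolding g_def by (cases "Suc s = n") auto
  have "inj_on g {..<n}"
    by (rule inj_onI) (auto simp: g split: if_splits)
  then have inj: "inj_on g P" by (rule inj_on_subset) (auto simp: P_def)
  have "g ` P \<subseteq> {..<n} - P"
  proof
    fix t assume "t \<in> g ` P"
    then obtain s where s: "s \<in> P" "t = g s" by blast
    have "f (g s) = f (Suc s)" using s(1) closed by (auto simp: P_def g)
    moreover have "E (f s) (f (Suc s))" using walk s(1) unfolding P_def by blast
    ultimately have "f (g s) \<notin> X" using X s(1) unfolding P_def independent_set_def by auto
    moreover have "g s < n" using n unfolding g_def by simp
    ultimately show "t \<in> {..<n} - P" using s(2) unfolding P_def by auto
  qed
  then have "card P \<le> card ({..<n} - P)"
    using card_image[OF inj] card_mono[of "{..<n} - P" "g ` P"] by simp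
  also have "\<dots> = n - card P"
    by (subst card_Diff_subset) (auto simp: P_def)
  finally show ?thesis unfolding P_def using n by linarith
qed

text \<open>Double counting the weights of independent sets along a closed walk of length
  \<open>2 * i + 1\<close> gives the classical bound \<open>(2 * i + 1) / i \<le> k\<close> for odd cycles.\<close>
lemma odd_closed_walk_bound:
  fixes f :: "nat \<Rightarrow> 'a"
  assumes G: "graph V E" and col: "frac_colorable V E k" and k: "0 \<le> k"
    and n: "n = 2 * i + 1" and closed: "f n = f 0" and walk: "\<forall>s<n. E (f s) (f (Suc s))"
  shows "real n \<le> k * real i"
proof -
  obtain Ind \<mu> where Ind: "finite Ind" "\<forall>X\<in>Ind. independent_set E X"
    and \<mu>: "\<forall>X. \<mu> X \<ge> (0::real)" "(\<Sum>X\<in>Ind. \<mu> X) = k" "\<forall>v\<in>V. (\<Sum>X\<in>{X\<in>Ind. v \<in> X}. \<mu> X) = 1"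
    using independent_set_weights[OF G col k] by auto
  have fV: "f s \<in> V" if "s < n" for s
    using walk that G unfolding graph_def by blast
  have "real n = (\<Sum>s<n. (\<Sum>X\<in>{X\<in>Ind. f s \<in> X}. \<mu> X))"
    using \<mu>(3) fV by simp
  also have "\<dots> = (\<Sum>s<n. (\<Sum>X\<in>Ind. if f s \<in> X then \<mu> X else 0))"
    using Ind(1) by (simp add: sum.inter_filter)
  also have "\<dots> = (\<Sum>X\<in>Ind. \<mu> X * card {s. s < n \<and> f s \<in> X})"
    by (subst sum.swap) (simp add: sum.If_cases Int_def lessThan_def conj_commute mult.commute)
  also have "\<dots> \<le> (\<Sum>X\<in>Ind. \<mu> X * i)"
    using independent_positions_on_odd_closed_walk[OF n closed walk] Ind(2) \<mu>(1)
    by (intro sum_mono mult_left_mono) auto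
  also have "\<dots> = k * i" using \<mu>(2) by (simp add: sum_distrib_right[symmetric])
  finally show ?thesis .
qed

text \<open>Two walks of equal length \<open>i\<close> from \<open>w\<close> ending in adjacent vertices close up to a closed walk
  of length \<open>2 * i + 1\<close>: go out along the first walk, cross the edge, return along the second.\<close>
lemma odd_closed_walk_from_layer_edge:
  assumes sym: "\<forall>u v. E u v \<longrightarrow> E v u"
    and wu: "(E ^^ i) w u" and wx: "(E ^^ i) w x" and ux: "E u x"
  shows "\<exists>f. f (2 * i + 1) = f 0 \<and> (\<forall>s<2 * i + 1. E (f s) (f (Suc s)))"
proof -
  obtain g where g: "g 0 = w" "g i = u" "\<forall>s<i. E (g s) (g (Suc s))"
    using wu unfolding relpowp_fun_conv by blast
  obtain h where h: "h 0 = w" "h i = x" "\<forall>s<i. E (h s) (h (Suc s))"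
    using wx unfolding relpowp_fun_conv by blast
  define f where "f s = (if s \<le> i then g s else h (2 * i + 1 - s))" for s
  have "E (f s) (f (Suc s))" if s: "s < 2 * i + 1" for s
  proof -
    consider "s < i" | "s = i" | "i < s" by linarith
    then show ?thesis
    proof cases
      case 1
      then show ?thesis using g(3) unfolding f_def by simp
    next
      case 2
      then show ?thesis using g(2) h(2) ux unfolding f_def by simp
    next
      case 3
      define t where "t = 2 * i - s"
      have t: "t < i" "2 * i + 1 - s = Suc t" "2 * i + 1 - Suc s = t"
        using 3 s unfolding t_def by auto
      then show ?thesis using h(3) sym 3 unfolding f_def by simp
    qed
  qed
  moreover have "f (2 * i + 1) = f 0" unfolding f_def using g(1) h(1) by simp
  ultimately show ?thesis by blast
qed

text \<open>If \<open>k < 2 + 1 / (2 * D - 1)\<close>, a fractionally \<open>k\<close>-colourable graph has no odd closed walk of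
  length below \<open>4 * D\<close>; hence no edge joins two vertices reached from a common vertex by
  walks of the same length \<open>i < 2 * D\<close>.\<close>
lemma no_layer_edge_below:
  assumes G: "graph V E" and col: "frac_colorable V E k" and k: "0 \<le> k"
    and D: "1 \<le> D" and k_small: "k < 2 + 1 / (2 * real D - 1)"
    and wu: "(E ^^ i) w u" and wx: "(E ^^ i) w x" and ux: "E u x"
  shows "2 * D \<le> i"
proof (rule ccontr)
  assume "\<not> 2 * D \<le> i"
  then have i_small: "real i \<le> 2 * real D - 1" by linarith
  have sym: "\<forall>u v. E u v \<longrightarrow> E v u" using G unfolding graph_def by blast
  obtain f where "f (2 * i + 1) = f 0" "\<forall>s<2 * i + 1. E (f s) (f (Suc s))"
    using odd_closed_walk_from_layer_edge[OF sym wu wx ux] by blast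
  from odd_closed_walk_bound[OF G col k refl this] have bound: "real (2 * i + 1) \<le> k * real i" .
  then have "i \<noteq> 0" by (cases "i = 0") auto
  have "k * real i < (2 + 1 / (2 * real D - 1)) * real i"
    using k_small \<open>i \<noteq> 0\<close> by (intro mult_strict_right_mono) auto
  also have "\<dots> \<le> 2 * real i + 1"
    using i_small D by (simp add: algebra_simps divide_le_eq)
  finally show False using bound by simp
qed

subsection \<open>Strip measures\<close>

text \<open>Around a precoloured vertex \<open>w\<close>, colour sets are assembled from disjoint strips
  \<open>U p\<close> (\<open>p < R\<close>) of measure \<open>\<tau> p\<close> inside a region \<open>K\<close> of measure \<open>k\<close>, odd strips inside the colour
  set of \<open>w\<close> and even ones outside, together with spare room of measure \<open>\<epsilon>\<close> outside \<open>K\<close>. A vertex at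
  distance \<open>i\<close> receives a set of measure \<open>layer_share k \<epsilon> R \<tau> i\<close>; the weights are admissible when the
  strips fit into \<open>K\<close> on both sides of the colour set of \<open>w\<close> and every layer share is at least one.\<close>
definition spare_share :: "real \<Rightarrow> real \<Rightarrow> nat \<Rightarrow> real" where
  "spare_share k \<epsilon> i = (if i = 1 then \<epsilon> * (k + \<epsilon> - 1) / (k + \<epsilon>) else if odd i then \<epsilon> else 0)"

definition layer_share :: "real \<Rightarrow> real \<Rightarrow> nat \<Rightarrow> (nat \<Rightarrow> real) \<Rightarrow> nat \<Rightarrow> real" where
  "layer_share k \<epsilon> R \<tau> i =
     (\<Sum>p\<in>{p. i < p \<and> p < R \<and> odd (p + i)}. \<tau> p) + (\<Sum>p<i. \<tau> p) / k + spare_share k \<epsilon> i"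

definition admissible_weights :: "real \<Rightarrow> real \<Rightarrow> nat \<Rightarrow> (nat \<Rightarrow> real) \<Rightarrow> bool" where
  "admissible_weights k \<epsilon> R \<tau> \<longleftrightarrow> (\<forall>p. 0 \<le> \<tau> p)
     \<and> (\<Sum>p\<in>{p. p < R \<and> odd p}. \<tau> p) \<le> k / (k + \<epsilon>)
     \<and> (\<Sum>p\<in>{p. p < R \<and> even p}. \<tau> p) \<le> k * (k + \<epsilon> - 1) / (k + \<epsilon>)
     \<and> (\<forall>i. 1 \<le> i \<and> i < R \<longrightarrow> 1 \<le> layer_share k \<epsilon> R \<tau> i)"

locale geometric_weights =
  fixes k \<epsilon> :: real and D :: nat and \<tau>\<^sub>0 t\<^sub>0 a b :: real
  assumes D: "2 \<le> D"
begin

definition q :: real where "q = k - 1"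
definition Ae :: real where "Ae = (\<Sum>u<D - 1. q ^ (2 * u))"
definition Ao :: real where "Ao = (\<Sum>u<D - 2. q ^ (2 * u + 1))"

definition \<tau> :: "nat \<Rightarrow> real" where
  "\<tau> p = (if p = 0 then \<tau>\<^sub>0 else if p = 1 then t\<^sub>0 else if p = 2 * D - 1 then b
     else if p < 2 * D - 1 then a * q ^ (2 * D - 2 - p) else 0)"

lemma Ae_Ao: "Ae = 1 + q * Ao"
proof -
  have "D - 1 = Suc (D - 2)" using D by simp
  then have "Ae = q ^ (2 * 0) + (\<Sum>u<D - 2. q ^ (2 * Suc u))"
    unfolding Ae_def using sum.lessThan_Suc_shift[of "\<lambda>u. q ^ (2 * u)" "D - 2"] by simp
  also have "(\<Sum>u<D - 2. q ^ (2 * Suc u)) = q * Ao"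
    unfolding Ao_def by (simp add: sum_distrib_left)
  finally show ?thesis by simp
qed

lemma \<tau>_geometric: "2 \<le> p \<Longrightarrow> p \<le> 2 * D - 2 \<Longrightarrow> \<tau> p = a * q ^ (2 * D - 2 - p)"
  unfolding \<tau>_def by auto

lemma sum_even_middle: "(\<Sum>p\<in>{p. 2 \<le> p \<and> p \<le> 2 * D - 2 \<and> even p}. \<tau> p) = a * Ae"
proof -
  have "(\<Sum>p\<in>{p. 2 \<le> p \<and> p \<le> 2 * D - 2 \<and> even p}. \<tau> p) = (\<Sum>u<D - 1. a * q ^ (2 * u))"
  proof (rule sum.reindex_bij_witness[of _ "\<lambda>u. 2 * D - 2 - 2 * u" "\<lambda>p. (2 * D - 2 - p) div 2"])
    fix p assume "p \<in> {p. 2 \<le> p \<and> p \<le> 2 * D - 2 \<and> even p}"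
    then obtain r where r: "p = 2 * r" "1 \<le> r" "r \<le> D - 1" by (auto elim!: evenE)
    then have e: "2 * D - 2 - p = 2 * (D - 1 - r)" by simp
    show "2 * D - 2 - 2 * ((2 * D - 2 - p) div 2) = p" "(2 * D - 2 - p) div 2 \<in> {..<D - 1}"
      unfolding e using r by simp_all
    have "\<tau> p = a * q ^ (2 * D - 2 - p)" using r by (intro \<tau>_geometric) auto
    then show "a * q ^ (2 * ((2 * D - 2 - p) div 2)) = \<tau> p" unfolding e by simp
  qed (use D in \<open>auto simp: \<tau>_def\<close>)
  then show ?thesis unfolding Ae_def by (simp add: sum_distrib_left)
qed

lemma sum_odd_middle: "(\<Sum>p\<in>{p. 2 \<le> p \<and> p \<le> 2 * D - 2 \<and> odd p}. \<tau> p) = a * Ao"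
proof -
  have "(\<Sum>p\<in>{p. 2 \<le> p \<and> p \<le> 2 * D - 2 \<and> odd p}. \<tau> p) = (\<Sum>u<D - 2. a * q ^ (2 * u + 1))"
  proof (rule sum.reindex_bij_witness[of _ "\<lambda>u. 2 * D - 3 - 2 * u" "\<lambda>p. (2 * D - 3 - p) div 2"])
    fix p assume "p \<in> {p. 2 \<le> p \<and> p \<le> 2 * D - 2 \<and> odd p}"
    then obtain r where r: "p = 2 * r + 1" "1 \<le> r" "r \<le> D - 2" by (auto elim!: oddE)
    then have e: "2 * D - 3 - p = 2 * (D - 2 - r)" "2 * D - 2 - p = 2 * (D - 2 - r) + 1" by auto
    show "2 * D - 3 - 2 * ((2 * D - 3 - p) div 2) = p" "(2 * D - 3 - p) div 2 \<in> {..<D - 2}"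
      unfolding e using r by simp_all
    have "\<tau> p = a * q ^ (2 * D - 2 - p)" using r by (intro \<tau>_geometric) auto
    then show "a * q ^ (2 * ((2 * D - 3 - p) div 2) + 1) = \<tau> p" unfolding e by simp
  qed (use D in \<open>auto simp: \<tau>_def\<close>)
  then show ?thesis unfolding Ao_def by (simp add: sum_distrib_left)
qed

lemma finite_middle: "finite {p. 2 \<le> p \<and> p \<le> 2 * D - 2 \<and> P p}"
  by (rule finite_subset[of _ "{..2 * D}"]) auto

lemma sum_even: "(\<Sum>p\<in>{p. p < 2 * D \<and> even p}. \<tau> p) = \<tau>\<^sub>0 + a * Ae"
proof -
  have "{p. p < 2 * D \<and> even p} = insert 0 {p. 2 \<le> p \<and> p \<le> 2 * D - 2 \<and> even p}"
    using D by (auto elim!: evenE)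
  then show ?thesis using sum_even_middle finite_middle by (simp add: \<tau>_def)
qed

lemma sum_odd: "(\<Sum>p\<in>{p. p < 2 * D \<and> odd p}. \<tau> p) = t\<^sub>0 + a * Ao + b"
proof -
  have "{p. p < 2 * D \<and> odd p} = insert 1 (insert (2 * D - 1) {p. 2 \<le> p \<and> p \<le> 2 * D - 2 \<and> odd p})"
    using D by (auto elim!: oddE)
  moreover have "\<tau> 1 = t\<^sub>0" "\<tau> (2 * D - 1) = b" "1 \<noteq> 2 * D - 1" using D by (auto simp: \<tau>_def)
  ultimately show ?thesis using sum_odd_middle finite_middle by simp
qed

lemma sum_below_last: "(\<Sum>p<2 * D - 1. \<tau> p) = \<tau>\<^sub>0 + t\<^sub>0 + a * (Ae + Ao)"
proof -
  have "{..<2 * D - 1} = insert 0 (insert 1 ({p. 2 \<le> p \<and> p \<le> 2 * D - 2 \<and> even p}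
      \<union> {p. 2 \<le> p \<and> p \<le> 2 * D - 2 \<and> odd p}))"
    using D by auto
  moreover have "\<tau> 0 = \<tau>\<^sub>0" "\<tau> 1 = t\<^sub>0" by (auto simp: \<tau>_def)
  ultimately show ?thesis
    using sum_even_middle sum_odd_middle finite_middle
    by (simp add: sum.union_disjoint disjoint_iff algebra_simps)
qed

abbreviation share :: "nat \<Rightarrow> real" where
  "share \<equiv> layer_share k \<epsilon> (2 * D) \<tau>"

lemma share_first: "share 1 = a * Ae + \<tau>\<^sub>0 / k + \<epsilon> * (k + \<epsilon> - 1) / (k + \<epsilon>)"
proof -
  have "{p. 1 < p \<and> p < 2 * D \<and> odd (p + 1)} = {p. 2 \<le> p \<and> p \<le> 2 * D - 2 \<and> even p}"
    by (auto elim!: evenE)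
  moreover have "\<tau> 0 = \<tau>\<^sub>0" by (simp add: \<tau>_def)
  ultimately show ?thesis
    unfolding layer_share_def by (simp add: spare_share_def sum_even_middle)
qed

lemma share_last: "share (2 * D - 1) = (\<tau>\<^sub>0 + t\<^sub>0 + a * (Ae + Ao)) / k + \<epsilon>"
proof -
  have empty: "{p. 2 * D - 1 < p \<and> p < 2 * D \<and> odd (p + (2 * D - 1))} = {}" by auto
  have "odd (2 * D - 1)" "2 * D - 1 \<noteq> 1" using D by auto
  then show ?thesis
    unfolding layer_share_def empty sum_below_last by (simp add: spare_share_def)
qed

lemma share_penultimate: "share (2 * D - 2) = b + (\<tau>\<^sub>0 + t\<^sub>0 + a * (Ae + Ao) - a) / k"
proof -
  have "{p. 2 * D - 2 < p \<and> p < 2 * D \<and> odd (p + (2 * D - 2))} = {2 * D - 1}"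
    using D by auto
  moreover have "\<tau> (2 * D - 1) = b" "\<tau> (2 * D - 2) = a" using D by (auto simp: \<tau>_def)
  moreover have "(\<Sum>p<2 * D - 1. \<tau> p) = \<tau> (2 * D - 2) + (\<Sum>p<2 * D - 2. \<tau> p)"
    using D sum.lessThan_Suc[of \<tau> "2 * D - 2"] by (simp add: Suc_diff_Suc numeral_2_eq_2)
  moreover have "even (2 * D - 2)" "2 * D - 2 \<noteq> 1" using D by auto
  ultimately show ?thesis
    unfolding layer_share_def using sum_below_last by (simp add: spare_share_def)
qed

text \<open>In the middle range the geometric ratio \<open>q = k - 1\<close> makes the shares periodic.\<close>
lemma share_step:
  assumes k: "k \<noteq> 0" and i: "2 \<le> i" "i + 3 \<le> 2 * D"
  shows "share i = share (i + 2)"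
proof -
  have split: "{p. i < p \<and> p < 2 * D \<and> odd (p + i)}
      = insert (i + 1) {p. i + 2 < p \<and> p < 2 * D \<and> odd (p + (i + 2))}"
    using i by (intro set_eqI) (auto; presburger)
  have fin: "finite {p. i + 2 < p \<and> p < 2 * D \<and> odd (p + (i + 2))}"
    by (rule finite_subset[of _ "{..2 * D}"]) auto
  have "\<tau> i = q * \<tau> (i + 1)"
  proof -
    have "2 * D - 2 - i = Suc (2 * D - 2 - (i + 1))" using i by simp
    then show ?thesis using \<tau>_geometric[of i] \<tau>_geometric[of "i + 1"] i by simp
  qed
  then have "\<tau> (i + 1) = (\<tau> i + \<tau> (i + 1)) / k" using k by (simp add: q_def field_simps)
  moreover have "spare_share k \<epsilon> i = spare_share k \<epsilon> (i + 2)" using i by (simp add: spare_share_def)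
  ultimately show ?thesis
    unfolding layer_share_def split using fin by (simp add: add_divide_distrib)
qed

lemma shares_from_boundary:
  assumes k: "k \<noteq> 0"
    and boundary: "1 \<le> share 1" "1 \<le> share (2 * D - 1)" "1 \<le> share (2 * D - 2)"
  shows "1 \<le> i \<Longrightarrow> i < 2 * D \<Longrightarrow> 1 \<le> share i"
proof (induction "2 * D - i" arbitrary: i rule: less_induct)
  case less
  show ?case
  proof (cases "i = 1 \<or> i = 2 * D - 1 \<or> i = 2 * D - 2")
    case True
    then show ?thesis using boundary by blast
  next
    case False
    then have "2 \<le> i" "i + 3 \<le> 2 * D" using less.prems by auto
    then show ?thesis using share_step[OF k] less.hyps[of "i + 2"] by simp
  qed
qed


end

text \<open>Choice of the amplitude \<open>a\<close> of the geometric part: as large as the first layer needs,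
  but small enough for the budget constraints. The hypothesis is the density condition of the
  theorem, with \<open>Ae \<ge> 1\<close> standing for the even geometric sum.\<close>
lemma geometric_amplitude:
  fixes k \<epsilon> q Ae :: real
  assumes k: "2 \<le> k" and \<epsilon>: "0 < \<epsilon>" and q: "q = k - 1" and Ae: "1 \<le> Ae"
    and H: "1 - \<epsilon> * (k + \<epsilon> - 1) \<le> \<epsilon> * (k + \<epsilon>) * q\<^sup>2 * Ae"
  shows "\<exists>a\<ge>0. a \<le> k * q * \<epsilon> \<and> a * Ae \<le> k / (k + \<epsilon>)
           \<and> a * Ae \<le> k * (k + \<epsilon> - 1) / (k + \<epsilon>)
           \<and> 1 \<le> a * Ae * q / k + (k + \<epsilon> - 1) / (k + \<epsilon>) + \<epsilon> * (k + \<epsilon> - 1) / (k + \<epsilon>)"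
proof -
  define m where "m = k + \<epsilon>"
  have m: "2 < m" "k / m \<le> k * (m - 1) / m" using k \<epsilon> by (auto simp: m_def divide_right_mono)
  have q1: "1 \<le> q" using k q by simp
  show ?thesis
  proof (cases "1 - \<epsilon> * (m - 1) \<le> 0")
    case True
    then have "m \<le> (m - 1) + \<epsilon> * (m - 1)" by simp
    then have "1 \<le> ((m - 1) + \<epsilon> * (m - 1)) / m" using m by (simp add: le_divide_eq)
    then have "1 \<le> (m - 1) / m + \<epsilon> * (m - 1) / m" by (simp add: add_divide_distrib)
    then show ?thesis using k q1 \<epsilon> m by (intro exI[of _ 0]) (auto simp: m_def)
  next
    case False
    define a where "a = k * (1 - \<epsilon> * (m - 1)) / (m * q * Ae)"
    have aAe: "a * Ae = k * ((1 - \<epsilon> * (m - 1)) / q) / m"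
      using Ae q1 m unfolding a_def by (simp add: field_simps)
    have "0 \<le> a" using False k q1 Ae m unfolding a_def by simp
    moreover have "a \<le> k * q * \<epsilon>"
    proof -
      have "1 - \<epsilon> * (m - 1) \<le> \<epsilon> * m * q\<^sup>2 * Ae" using H by (simp add: m_def)
      moreover have "0 \<le> m * q * Ae" using m q1 Ae by simp
      ultimately have "a \<le> k * (\<epsilon> * m * q\<^sup>2 * Ae) / (m * q * Ae)"
        unfolding a_def using k by (intro divide_right_mono mult_left_mono) auto
      also have "\<dots> = k * q * \<epsilon>" using Ae q1 m by (simp add: field_simps power2_eq_square)
      finally show ?thesis .
    qed
    moreover have "a * Ae \<le> k / m"
    proof -
      have "0 \<le> \<epsilon> * (m - 1)" using \<epsilon> m by simp
      then have "(1 - \<epsilon> * (m - 1)) / q \<le> 1" using q1 by (simp add: divide_le_eq)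
      then have "k * ((1 - \<epsilon> * (m - 1)) / q) / m \<le> k * 1 / m"
        using k m by (intro divide_right_mono mult_left_mono) auto
      then show ?thesis unfolding aAe by simp
    qed
    moreover have "1 \<le> a * Ae * q / k + (m - 1) / m + \<epsilon> * (m - 1) / m"
      unfolding aAe using q1 k m by (simp add: field_simps)
    ultimately show ?thesis using m(2) unfolding m_def by (intro exI[of _ a]) auto
  qed
qed

lemma odd_boundary_weights:
  fixes k \<epsilon> q Ae Ao a \<tau>\<^sub>0 :: real
  assumes k: "2 \<le> k" and \<epsilon>: "0 < \<epsilon>" and q: "q = k - 1" and Ae: "Ae = 1 + q * Ao" and Ao: "0 \<le> Ao"
    and a: "0 \<le> a" "a \<le> k * q * \<epsilon>" "a * Ae \<le> k / (k + \<epsilon>)"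
    and \<tau>\<^sub>0: "\<tau>\<^sub>0 = k * (k + \<epsilon> - 1) / (k + \<epsilon>) - a * Ae"
  shows "\<exists>t\<^sub>0 b. 0 \<le> t\<^sub>0 \<and> 0 \<le> b \<and> t\<^sub>0 + a * Ao + b \<le> k / (k + \<epsilon>)
     \<and> 1 \<le> (\<tau>\<^sub>0 + t\<^sub>0 + a * (Ae + Ao)) / k + \<epsilon>
     \<and> 1 \<le> b + (\<tau>\<^sub>0 + t\<^sub>0 + a * (Ae + Ao) - a) / k"
proof -
  define m where "m = k + \<epsilon>"
  have m: "2 < m" and kpos: "0 < k" using k \<epsilon> by (auto simp: m_def)
  define t\<^sub>0 where "t\<^sub>0 = max 0 (k * (1 - \<epsilon> * m) / m - a * Ao)"
  define X where "X = \<tau>\<^sub>0 + t\<^sub>0 + a * (Ae + Ao)"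
  define b where "b = max 0 (1 - (X - a) / k)"
  have X: "X = k * (m - 1) / m + t\<^sub>0 + a * Ao" unfolding X_def \<tau>\<^sub>0 m_def by (simp add: algebra_simps)
  have "k * (1 - \<epsilon>) \<le> X"
  proof -
    have "k * (m - 1) / m + (k * (1 - \<epsilon> * m) / m - a * Ao) + a * Ao = k * (1 - \<epsilon>)"
      using m by (simp add: field_simps)
    moreover have "k * (1 - \<epsilon> * m) / m - a * Ao \<le> t\<^sub>0" unfolding t\<^sub>0_def by simp
    ultimately show ?thesis unfolding X by linarith
  qed
  then have last: "1 \<le> X / k + \<epsilon>" using kpos by (simp add: field_simps)
  have odd_budget: "t\<^sub>0 + a * Ao + b \<le> k / m"
  proof (cases "0 \<le> k * (1 - \<epsilon> * m) / m - a * Ao")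
    case True
    then have t\<^sub>0_eq: "t\<^sub>0 = k * (1 - \<epsilon> * m) / m - a * Ao" unfolding t\<^sub>0_def by simp
    have "X = k * (1 - \<epsilon>)" unfolding X t\<^sub>0_eq using m by (simp add: field_simps)
    then have "1 - (X - a) / k = \<epsilon> + a / k" using kpos by (simp add: field_simps)
    then have "b = \<epsilon> + a / k" unfolding b_def using \<epsilon> a(1) kpos by simp
    moreover have "a / k \<le> q * \<epsilon>" using a(2) kpos by (simp add: divide_le_eq algebra_simps)
    moreover have "k * (1 - \<epsilon> * m) / m = k / m - k * \<epsilon>" using m by (simp add: field_simps)
    ultimately show ?thesis unfolding t\<^sub>0_eq q by (simp add: algebra_simps)
  next
    case False
    then have t\<^sub>0_eq: "t\<^sub>0 = 0" unfolding t\<^sub>0_def by simp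
    have "1 - (X - a) / k = 1 / m - a * Ao / k + a / k"
      unfolding X t\<^sub>0_eq using m kpos by (simp add: field_simps)
    then have b_eq: "b = max 0 (1 / m - a * Ao / k + a / k)" unfolding b_def by simp
    show ?thesis
    proof (cases "1 / m - a * Ao / k + a / k \<le> 0")
      case True
      have "Ao \<le> q * Ao" using Ao k q by (simp add: mult_le_cancel_right1)
      then have "a * Ao \<le> a * Ae" using Ae a(1) by (intro mult_left_mono) auto
      then show ?thesis using True a(3) unfolding b_eq t\<^sub>0_eq m_def by simp
    next
      case False
      then have "t\<^sub>0 + a * Ao + b = 1 / m + a * Ae / k"
        unfolding b_eq t\<^sub>0_eq Ae q using kpos by (simp add: field_simps)
      also have "a * Ae / k \<le> 1 / m"
        using a(3) kpos m by (simp add: m_def divide_le_eq field_simps)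
      also have "1 / m + 1 / m \<le> k / m" using m k by (simp add: field_simps)
      finally show ?thesis by simp
    qed
  qed
  have "1 \<le> b + (X - a) / k" "0 \<le> t\<^sub>0" "0 \<le> b" unfolding b_def t\<^sub>0_def by simp_all
  then show ?thesis using odd_budget last unfolding X_def m_def
    by (intro exI[of _ t\<^sub>0] exI[of _ b]) simp
qed


lemma admissible_weights_single_layer:
  fixes k \<epsilon> :: real
  assumes k: "2 \<le> k" and \<epsilon>: "0 < \<epsilon>" and H: "\<epsilon> * ((k - 1 + \<epsilon>) / (k + \<epsilon>)) \<ge> 1 / (k + \<epsilon>)"
  shows "admissible_weights k \<epsilon> 2 (\<lambda>p. if p = 0 then k * (k + \<epsilon> - 1) / (k + \<epsilon>) else 0)"
proof -
  define m where "m = k + \<epsilon>"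
  have m: "2 < m" using k \<epsilon> unfolding m_def by simp
  have "1 / m \<le> \<epsilon> * (m - 1) / m" using H unfolding m_def by (simp add: algebra_simps)
  then have "1 \<le> \<epsilon> * (m - 1)" using m by (simp add: divide_le_eq)
  then have "1 \<le> ((m - 1) + \<epsilon> * (m - 1)) / m" using m by (simp add: le_divide_eq)
  then have cover: "1 \<le> (m - 1) / m + \<epsilon> * (m - 1) / m" by (simp add: add_divide_distrib)
  have odd: "{p. p < 2 \<and> odd p} = {1::nat}" and even: "{p. p < 2 \<and> even p} = {0::nat}"
    by (auto simp: less_2_cases_iff)
  have "layer_share k \<epsilon> 2 (\<lambda>p. if p = 0 then k * (m - 1) / m else 0) 1 = (m - 1) / m + \<epsilon> * (m - 1) / m"
    using k by (simp add: layer_share_def spare_share_def m_def)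
  then show ?thesis
    using k m cover unfolding admissible_weights_def odd even m_def by (auto simp: less_2_cases_iff)
qed

lemma admissible_weights_exist:
  fixes k \<epsilon> :: real and D :: nat
  assumes k: "2 \<le> k" and \<epsilon>: "0 < \<epsilon>" and D: "1 \<le> D"
    and H: "\<epsilon> * (\<Sum>j<D - 1. (k - 1) ^ (2 * j + 2)) + \<epsilon> * ((k - 1 + \<epsilon>) / (k + \<epsilon>)) \<ge> 1 / (k + \<epsilon>)"
  shows "\<exists>\<tau>. admissible_weights k \<epsilon> (2 * D) \<tau>"
proof (cases "D = 1")
  case True
  then show ?thesis using admissible_weights_single_layer[OF k \<epsilon>] H by auto
next
  case False
  then have D2: "2 \<le> D" using D by simp
  have loc: "geometric_weights D" using D2 by (rule geometric_weights.intro)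
  define q where "q = k - 1"
  let ?Ae = "geometric_weights.Ae k D" and ?Ao = "geometric_weights.Ao k D"
  note defs = geometric_weights.Ae_def[OF loc] geometric_weights.Ao_def[OF loc]
    geometric_weights.q_def[OF loc]
  have Ae: "?Ae = 1 + q * ?Ao" using geometric_weights.Ae_Ao[OF loc] by (simp add: defs(3) q_def)
  have Ao: "0 \<le> ?Ao" using k unfolding defs by (intro sum_nonneg) simp
  have "(\<Sum>j<D - 1. (k - 1) ^ (2 * j + 2)) = q\<^sup>2 * ?Ae"
    unfolding defs q_def sum_distrib_left
    by (intro sum.cong) (simp_all add: power_add power2_eq_square)
  then have "1 - \<epsilon> * (k + \<epsilon> - 1) \<le> \<epsilon> * (k + \<epsilon>) * q\<^sup>2 * ?Ae"
    using H k \<epsilon> by (simp add: field_simps)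
  moreover have "1 \<le> ?Ae" using Ae Ao k q_def by simp
  ultimately obtain a where a: "0 \<le> a" "a \<le> k * q * \<epsilon>" "a * ?Ae \<le> k / (k + \<epsilon>)"
      "a * ?Ae \<le> k * (k + \<epsilon> - 1) / (k + \<epsilon>)"
      "1 \<le> a * ?Ae * q / k + (k + \<epsilon> - 1) / (k + \<epsilon>) + \<epsilon> * (k + \<epsilon> - 1) / (k + \<epsilon>)"
    using geometric_amplitude[OF k \<epsilon> q_def] by blast
  define \<tau>\<^sub>0 where "\<tau>\<^sub>0 = k * (k + \<epsilon> - 1) / (k + \<epsilon>) - a * ?Ae"
  obtain t\<^sub>0 b where tb: "0 \<le> t\<^sub>0" "0 \<le> b" "t\<^sub>0 + a * ?Ao + b \<le> k / (k + \<epsilon>)"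
      "1 \<le> (\<tau>\<^sub>0 + t\<^sub>0 + a * (?Ae + ?Ao)) / k + \<epsilon>"
      "1 \<le> b + (\<tau>\<^sub>0 + t\<^sub>0 + a * (?Ae + ?Ao) - a) / k"
    using odd_boundary_weights[OF k \<epsilon> q_def Ae Ao a(1-3) \<tau>\<^sub>0_def] by blast
  interpret W: geometric_weights k \<epsilon> D \<tau>\<^sub>0 t\<^sub>0 a b by (rule loc)
  have "a * ?Ae + \<tau>\<^sub>0 / k = a * ?Ae * q / k + (k + \<epsilon> - 1) / (k + \<epsilon>)"
    using k unfolding \<tau>\<^sub>0_def q_def by (simp add: field_simps)
  then have "1 \<le> W.share 1" using a(5) unfolding W.share_first by simp
  then have "\<forall>i. 1 \<le> i \<and> i < 2 * D \<longrightarrow> 1 \<le> W.share i"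
    using W.shares_from_boundary W.share_last W.share_penultimate tb(4,5) k by auto
  moreover have "\<forall>p. 0 \<le> W.\<tau> p"
  proof
    fix p
    have "0 \<le> \<tau>\<^sub>0" using a(4) unfolding \<tau>\<^sub>0_def by simp
    then show "0 \<le> W.\<tau> p" using a(1) tb(1,2) k unfolding W.\<tau>_def W.q_def by simp
  qed
  moreover have "\<tau>\<^sub>0 + a * ?Ae = k * (k + \<epsilon> - 1) / (k + \<epsilon>)" unfolding \<tau>\<^sub>0_def by simp
  ultimately have "admissible_weights k \<epsilon> (2 * D) W.\<tau>"
    unfolding admissible_weights_def W.sum_odd W.sum_even using tb(3) by simp
  then show ?thesis by blast
qed

subsection \<open>Layer sets\<close>

lemma base_region:
  assumes W: "finite W" "\<forall>w\<in>W. unit_set m (c w)" and k: "0 < k" "k < m"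
  shows "\<exists>K. K \<in> sets lebesgue \<and> K \<subseteq> {0..<m} \<and> measure lebesgue K = k
    \<and> (\<forall>w\<in>W. measure lebesgue (K \<inter> c w) = k / m)"
proof -
  have c: "c w \<in> sets lebesgue" "{0..<m} \<inter> c w = c w" "measure lebesgue (c w) = 1"
    if "w \<in> W" for w
    using unit_setD[OF W(2)[rule_format, OF that]] by auto
  have "\<exists>P. (\<forall>x\<in>{()}. P x \<in> sets lebesgue \<and> P x \<subseteq> {0..<m}
              \<and> measure lebesgue (P x) = k / m * measure lebesgue {0..<m}
              \<and> (\<forall>w\<in>W. measure lebesgue (P x \<inter> c w) = k / m * measure lebesgue ({0..<m} \<inter> c w)))
            \<and> disjoint_family_on P {()}"
    by (rule proportional_split) (use W(1) c(1) k in auto)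
  then obtain P where P: "\<forall>x\<in>{()}. P x \<in> sets lebesgue \<and> P x \<subseteq> {0..<m}
              \<and> measure lebesgue (P x) = k / m * measure lebesgue {0..<m}
              \<and> (\<forall>w\<in>W. measure lebesgue (P x \<inter> c w) = k / m * measure lebesgue ({0..<m} \<inter> c w))"
    by (elim exE conjE) (rule that)
  have "measure lebesgue (P ()) = k" using P k by simp
  moreover have "\<forall>w\<in>W. measure lebesgue (P () \<inter> c w) = k / m" using P c(2,3) by simp
  moreover have "P () \<in> sets lebesgue" "P () \<subseteq> {0..<m}" using P by simp_all
  ultimately show ?thesis by blast
qed

lemma parity_strips:
  fixes \<tau> :: "nat \<Rightarrow> real" and K S :: "real set"
  assumes K: "K \<in> sets lebesgue" "bounded K" and S: "S \<in> sets lebesgue" and \<tau>: "\<forall>p. 0 \<le> \<tau> p"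
    and odd_budget: "(\<Sum>p\<in>{p. p < R \<and> odd p}. \<tau> p) \<le> measure lebesgue (K \<inter> S)"
    and even_budget: "(\<Sum>p\<in>{p. p < R \<and> even p}. \<tau> p) \<le> measure lebesgue (K - S)"
  shows "\<exists>U. (\<forall>p<R. U p \<in> sets lebesgue \<and> U p \<subseteq> K \<and> measure lebesgue (U p) = \<tau> p
              \<and> (odd p \<longrightarrow> U p \<subseteq> S) \<and> (even p \<longrightarrow> U p \<inter> S = {}))
           \<and> disjoint_family_on U {..<R}"
proof -
  have sets: "K \<inter> S \<in> sets lebesgue" "bounded (K \<inter> S)" "K - S \<in> sets lebesgue" "bounded (K - S)"
    using K S by (auto intro: bounded_subset)
  have "\<exists>Uo. (\<forall>p\<in>{p. p < R \<and> odd p}. Uo p \<in> sets lebesgue \<and> Uo p \<subseteq> K \<inter> S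
      \<and> measure lebesgue (Uo p) = \<tau> p) \<and> disjoint_family_on Uo {p. p < R \<and> odd p}"
    by (rule disjoint_subsets_of_measures) (use sets \<tau> odd_budget in auto)
  moreover have "\<exists>Ue. (\<forall>p\<in>{p. p < R \<and> even p}. Ue p \<in> sets lebesgue \<and> Ue p \<subseteq> K - S
      \<and> measure lebesgue (Ue p) = \<tau> p) \<and> disjoint_family_on Ue {p. p < R \<and> even p}"
    by (rule disjoint_subsets_of_measures) (use sets \<tau> even_budget in auto)
  ultimately obtain Uo Ue where
      Uo: "\<forall>p\<in>{p. p < R \<and> odd p}. Uo p \<in> sets lebesgue \<and> Uo p \<subseteq> K \<inter> S \<and> measure lebesgue (Uo p) = \<tau> p"
        "disjoint_family_on Uo {p. p < R \<and> odd p}"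
    and Ue: "\<forall>p\<in>{p. p < R \<and> even p}. Ue p \<in> sets lebesgue \<and> Ue p \<subseteq> K - S \<and> measure lebesgue (Ue p) = \<tau> p"
        "disjoint_family_on Ue {p. p < R \<and> even p}"
    by blast
  define U where "U p = (if odd p then Uo p else Ue p)" for p
  have strips: "\<forall>p<R. U p \<in> sets lebesgue \<and> U p \<subseteq> K \<and> measure lebesgue (U p) = \<tau> p
      \<and> (odd p \<longrightarrow> U p \<subseteq> S) \<and> (even p \<longrightarrow> U p \<inter> S = {})"
    using Uo(1) Ue(1) unfolding U_def by auto
  have "U p \<inter> U p' = {}" if "p < R" "p' < R" "p \<noteq> p'" for p p'
  proof (cases "odd p = odd p'")
    case True
    then show ?thesis using Uo(2) Ue(2) that unfolding U_def disjoint_family_on_def by auto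
  next
    case False
    then have "U p \<subseteq> S \<and> U p' \<inter> S = {} \<or> U p' \<subseteq> S \<and> U p \<inter> S = {}"
      using strips that by auto
    then show ?thesis by blast
  qed
  then have "disjoint_family_on U {..<R}" by (auto simp: disjoint_family_on_def)
  with strips show ?thesis by (intro exI[of _ U]) simp
qed


definition spare_room :: "real set \<Rightarrow> real set \<Rightarrow> nat \<Rightarrow> real set" where
  "spare_room Z S i = (if i = 1 then Z - S else if odd i then Z else {})"

text \<open>The colour set offered to a vertex at distance \<open>i\<close> from a precoloured vertex with colour
  set \<open>S\<close>: all strips above \<open>i\<close> of parity opposite to \<open>i\<close>, the vertex's own share \<open>\<Psi>\<close> of the
  strips below \<open>i\<close>, and on odd layers the spare room \<open>Z\<close> outside the region of the strips.\<close>
definition layer_set ::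
  "nat \<Rightarrow> (nat \<Rightarrow> real set) \<Rightarrow> real set \<Rightarrow> real set \<Rightarrow> real set \<Rightarrow> nat \<Rightarrow> real set" where
  "layer_set R U \<Psi> Z S i = (\<Union>p\<in>{p. i < p \<and> p < R \<and> odd (p + i)}. U p) \<union> (\<Psi> \<inter> (\<Union>p<i. U p))
     \<union> spare_room Z S i"

lemma layer_set_measure:
  fixes U :: "nat \<Rightarrow> real set" and \<tau> :: "nat \<Rightarrow> real"
  assumes U: "\<forall>p<R. U p \<in> sets lebesgue \<and> U p \<subseteq> K \<and> measure lebesgue (U p) = \<tau> p"
      "disjoint_family_on U {..<R}" and K: "bounded K"
    and \<Psi>: "\<Psi> \<in> sets lebesgue" "\<Psi> \<subseteq> K" "\<forall>p<R. measure lebesgue (\<Psi> \<inter> U p) = \<tau> p / k"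
    and Z: "Z \<in> sets lebesgue" "bounded Z" "Z \<inter> K = {}" and S: "S \<in> sets lebesgue"
    and i: "i < R"
  shows "layer_set R U \<Psi> Z S i \<in> sets lebesgue"
    and "measure lebesgue (layer_set R U \<Psi> Z S i) = (\<Sum>p\<in>{p. i < p \<and> p < R \<and> odd (p + i)}. \<tau> p)
           + (\<Sum>p<i. \<tau> p) / k + measure lebesgue (spare_room Z S i)"
proof -
  define F where "F = {p. i < p \<and> p < R \<and> odd (p + i)}"
  define A1 where "A1 = (\<Union>p\<in>F. U p)"
  define A2 where "A2 = (\<Union>p<i. \<Psi> \<inter> U p)"
  define A3 where "A3 = spare_room Z S i"
  have eq: "layer_set R U \<Psi> Z S i = A1 \<union> A2 \<union> A3"
    unfolding layer_set_def A1_def A2_def A3_def F_def by blast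
  have F: "finite F" "\<And>p. p \<in> F \<Longrightarrow> p < R" unfolding F_def by auto
  have lmeas: "T \<in> lmeasurable" if "T \<in> sets lebesgue" "T \<subseteq> K" for T
    using that K by (intro bounded_set_imp_lmeasurable) (auto intro: bounded_subset)
  have UU: "U p \<inter> U p' = {}" if "p < R" "p' < R" "p \<noteq> p'" for p p'
    using U(2) that unfolding disjoint_family_on_def by blast
  have U_lmeas: "U p \<in> lmeasurable" and \<Psi>U_lmeas: "\<Psi> \<inter> U p \<in> lmeasurable" if "p < R" for p
    using U that \<Psi>(1) by (auto intro!: lmeas)
  have pairwise: "pairwise (\<lambda>p p'. disjnt (V p) (V p')) P" if "P \<subseteq> {..<R}" "\<And>p. V p \<subseteq> U p" for P V
    using that UU unfolding pairwise_def disjnt_def by blast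
  have A1: "A1 \<in> lmeasurable" "measure lebesgue A1 = (\<Sum>p\<in>F. \<tau> p)"
  proof -
    have "measure lebesgue A1 = (\<Sum>p\<in>F. measure lebesgue (U p))"
      unfolding A1_def using F by (intro measure_UNION' pairwise U_lmeas) auto
    then show "measure lebesgue A1 = (\<Sum>p\<in>F. \<tau> p)" using U F by simp
    show "A1 \<in> lmeasurable" unfolding A1_def using F U_lmeas by (intro fmeasurable.finite_UN) auto
  qed
  have A2: "A2 \<in> lmeasurable" "measure lebesgue A2 = (\<Sum>p<i. \<tau> p) / k"
  proof -
    have "measure lebesgue A2 = (\<Sum>p<i. measure lebesgue (\<Psi> \<inter> U p))"
      unfolding A2_def using i by (intro measure_UNION' pairwise \<Psi>U_lmeas) auto
    then show "measure lebesgue A2 = (\<Sum>p<i. \<tau> p) / k"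
      using \<Psi>(3) i by (simp add: sum_divide_distrib)
    show "A2 \<in> lmeasurable" unfolding A2_def using i \<Psi>U_lmeas by (intro fmeasurable.finite_UN) auto
  qed
  have A3: "A3 \<in> lmeasurable" unfolding A3_def spare_room_def
    using Z S by (auto intro!: bounded_set_imp_lmeasurable intro: bounded_subset)
  have "U p \<inter> U p' = {}" if "p \<in> F" "p' < i" for p p'
    using UU that i unfolding F_def by simp
  then have "A1 \<inter> A2 = {}" unfolding A1_def A2_def by blast
  moreover have "(A1 \<union> A2) \<inter> A3 = {}"
    using U \<Psi>(2) Z(3) F i unfolding A1_def A2_def A3_def spare_room_def by auto
  ultimately have "measure lebesgue (A1 \<union> A2 \<union> A3) = measure lebesgue A1 + measure lebesgue A2 + measure lebesgue A3"
    using A1(1) A2(1) A3 by (simp add: measure_Un3 fmeasurable.Un)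
  then show "measure lebesgue (layer_set R U \<Psi> Z S i) = (\<Sum>p\<in>{p. i < p \<and> p < R \<and> odd (p + i)}. \<tau> p)
           + (\<Sum>p<i. \<tau> p) / k + measure lebesgue (spare_room Z S i)"
    unfolding eq using A1 A2 by (simp add: F_def A3_def)
  show "layer_set R U \<Psi> Z S i \<in> sets lebesgue" unfolding eq using A1(1) A2(1) A3 by auto
qed


lemma layer_set_subset: "\<forall>p<R. U p \<subseteq> K \<Longrightarrow> \<Psi> \<subseteq> K \<Longrightarrow> layer_set R U \<Psi> Z S i \<subseteq> K \<union> Z"
  unfolding layer_set_def spare_room_def by auto

text \<open>The first layer avoids the precoloured set \<open>S\<close>: it only uses even strips and \<open>Z - S\<close>.\<close>
lemma layer_set_first:
  assumes "\<forall>p<R. even p \<longrightarrow> U p \<inter> S = {}" and "0 < R"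
  shows "S \<inter> layer_set R U \<Psi> Z S 1 = {}"
proof -
  have "{p. 1 < p \<and> p < R \<and> odd (p + 1)} \<union> {..<1} \<subseteq> {p. p < R \<and> even p} \<union> {0}" by auto
  then show ?thesis using assms unfolding layer_set_def spare_room_def by auto
qed

text \<open>Consecutive layers offer disjoint colour sets to adjacent vertices: strips of the two
  parities are distinct, the lower shares come from disjoint \<open>\<Psi>\<close>s, and the spare room is
  used on one of the two layers only.\<close>
lemma layer_sets_consecutive:
  assumes U: "disjoint_family_on U {..<R}" "\<forall>p<R. U p \<subseteq> K" and Z: "Z \<inter> K = {}"
    and \<Psi>: "\<Psi>\<^sub>u \<inter> \<Psi>\<^sub>x = {}" and i: "1 \<le> i" "i + 1 < R"
  shows "layer_set R U \<Psi>\<^sub>u Z S i \<inter> layer_set R U \<Psi>\<^sub>x Z S (i + 1) = {}"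
proof -
  have UU: "U p \<inter> U p' = {}" if "p < R" "p' < R" "p \<noteq> p'" for p p'
    using U(1) that unfolding disjoint_family_on_def by blast
  define upper where "upper j = (\<Union>p\<in>{p. j < p \<and> p < R \<and> odd (p + j)}. U p)" for j
  define lower where "lower \<Psi> j = \<Psi> \<inter> (\<Union>p<j. U p)" for \<Psi> j
  have "upper i \<inter> upper (i + 1) = {}"
  proof -
    have "U p \<inter> U p' = {}" if "i < p" "p < R" "odd (p + i)" "i + 1 < p'" "p' < R" "odd (p' + (i + 1))" for p p'
      using UU that by (metis add.commute odd_add odd_one)
    then show ?thesis unfolding upper_def by blast
  qed
  moreover have "upper i \<inter> lower \<Psi>\<^sub>x (i + 1) = {}"
  proof -
    have "U p \<inter> U p' = {}" if "i < p" "p < R" "p' < i + 1" for p p' using UU that by simp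
    then show ?thesis unfolding upper_def lower_def by blast
  qed
  moreover have "lower \<Psi>\<^sub>u i \<inter> upper (i + 1) = {}"
  proof -
    have "U p \<inter> U p' = {}" if "p < i" "i + 1 < p'" "p' < R" for p p' using UU that by simp
    then show ?thesis unfolding upper_def lower_def by blast
  qed
  moreover have "lower \<Psi>\<^sub>u i \<inter> lower \<Psi>\<^sub>x (i + 1) = {}" unfolding lower_def using \<Psi> by blast
  moreover have "spare_room Z S i \<inter> spare_room Z S (i + 1) = {}"
    unfolding spare_room_def using i by auto
  moreover have "U p \<subseteq> K" if "p < i + 1" for p using U(2) i that by simp
  then have "upper j \<subseteq> K" "lower \<Psi> (i + 1) \<subseteq> K" "spare_room Z S j \<subseteq> Z" for j \<Psi>
    using U(2) unfolding upper_def lower_def spare_room_def by auto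
  moreover have "lower \<Psi> i \<subseteq> lower \<Psi> (i + 1)" for \<Psi> unfolding lower_def by force
  ultimately show ?thesis
    unfolding layer_set_def upper_def[symmetric] lower_def[symmetric] using Z by blast
qed

text \<open>On the last layer nothing is taken from strips of parity other than the vertex's own share.\<close>
lemma layer_set_last:
  assumes \<Psi>: "\<Psi>\<^sub>u \<inter> \<Psi>\<^sub>x = {}" "\<Psi>\<^sub>x \<subseteq> K" and Z: "Z \<inter> K = {}"
  shows "layer_set R U \<Psi>\<^sub>u Z S (R - 1) \<inter> \<Psi>\<^sub>x = {}"
proof -
  have "{p. R - 1 < p \<and> p < R \<and> odd (p + (R - 1))} = {}" by auto
  then have "layer_set R U \<Psi>\<^sub>u Z S (R - 1) \<subseteq> \<Psi>\<^sub>u \<union> Z" unfolding layer_set_def spare_room_def by auto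
  then show ?thesis using \<Psi> Z by blast
qed


lemma spare_room_measure:
  assumes K: "K \<in> sets lebesgue" "K \<subseteq> {0..<k + \<epsilon>}" "measure lebesgue K = k"
    and S: "unit_set (k + \<epsilon>) S" and KS: "measure lebesgue (K \<inter> S) = k / (k + \<epsilon>)"
    and k: "0 < k" and \<epsilon>: "0 < \<epsilon>"
  shows "measure lebesgue (spare_room ({0..<k + \<epsilon>} - K) S i) = spare_share k \<epsilon> i"
proof -
  define m where "m = k + \<epsilon>"
  have m: "0 < m" using k \<epsilon> by (simp add: m_def)
  have lmeas: "K \<in> lmeasurable" "S \<in> lmeasurable" "{0..<m} \<in> lmeasurable"
    using K(1,2) unit_setD[OF S] by (auto intro: lmeasurable_in_interval simp: m_def)
  have S_sub: "S \<subseteq> {0..<m}" "measure lebesgue S = 1" using unit_setD[OF S] by (auto simp: m_def)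
  have "measure lebesgue ({0..<m} - K) = m - k"
    using lmeas K(2,3) m by (subst measure_Diff) (auto simp: m_def fmeasurable_def)
  moreover have "measure lebesgue ({0..<m} - K - S) = \<epsilon> * (k + \<epsilon> - 1) / (k + \<epsilon>)"
  proof -
    have "measure lebesgue (K \<union> S) = k + 1 - k / m"
      using measure_Un3[OF lmeas(1,2)] K(3) S_sub KS by (simp add: m_def)
    moreover have "{0..<m} - K - S = {0..<m} - (K \<union> S)" by blast
    ultimately have "measure lebesgue ({0..<m} - K - S) = m - (k + 1 - k / m)"
      using lmeas K(2) S_sub m by (simp, subst measure_Diff) (auto simp: m_def fmeasurable_def)
    then show ?thesis using m by (simp add: m_def field_simps)
  qed
  ultimately show ?thesis unfolding spare_room_def spare_share_def m_def by simp
qed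


definition ample_set :: "real \<Rightarrow> real set \<Rightarrow> bool" where
  "ample_set m S \<longleftrightarrow> S \<in> sets lebesgue \<and> S \<subseteq> {0..<m} \<and> 1 \<le> measure lebesgue S"

lemma ample_set_unit_subset:
  assumes "ample_set m S"
  shows "\<exists>T. T \<subseteq> S \<and> unit_set m T"
proof -
  have S: "S \<in> sets lebesgue" "S \<subseteq> {0..<m}" "1 \<le> measure lebesgue S"
    using assms unfolding ample_set_def by auto
  obtain T where T: "T \<in> sets lebesgue" "T \<subseteq> S" "measure lebesgue T = 1"
    using measurable_subset_of_measure[OF S(1) bounded_subset[OF bounded_Ico S(2)], of 1] S(3) by auto
  then have "T \<in> lmeasurable" using S(2) by (intro lmeasurable_in_interval) auto
  then have "emeasure lebesgue T = 1" using T(3) by (simp add: emeasure_eq_measure2)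
  then show ?thesis using T S(2) unfolding unit_set_def by (intro exI[of _ T]) auto
qed

lemma strips_and_uniform_coloring:
  fixes c :: "'a \<Rightarrow> real set" and \<tau> :: "nat \<Rightarrow> real"
  assumes G: "graph V E" and col: "frac_colorable V E k" and W: "finite W" and k: "0 < k"
    and K: "K \<in> sets lebesgue" "K \<subseteq> {0..<m}" "measure lebesgue K = k"
    and c: "\<forall>w\<in>W. unit_set m (c w)" and KS: "\<forall>w\<in>W. measure lebesgue (K \<inter> c w) = k / m"
    and \<tau>: "\<forall>p. 0 \<le> \<tau> p" "(\<Sum>p\<in>{p. p < R \<and> odd p}. \<tau> p) \<le> k / m"
      "(\<Sum>p\<in>{p. p < R \<and> even p}. \<tau> p) \<le> k * (m - 1) / m"
  shows "\<exists>U \<psi>. (\<forall>w\<in>W. (\<forall>p<R. U w p \<in> sets lebesgue \<and> U w p \<subseteq> K \<and> measure lebesgue (U w p) = \<tau> p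
              \<and> (odd p \<longrightarrow> U w p \<subseteq> c w) \<and> (even p \<longrightarrow> U w p \<inter> c w = {}))
           \<and> disjoint_family_on (U w) {..<R})
       \<and> (\<forall>v\<in>V. \<psi> v \<in> sets lebesgue \<and> \<psi> v \<subseteq> K \<and> measure lebesgue (\<psi> v) = 1
           \<and> (\<forall>w\<in>W. \<forall>p<R. measure lebesgue (\<psi> v \<inter> U w p) = \<tau> p / k))
       \<and> (\<forall>u\<in>V. \<forall>x\<in>V. E u x \<longrightarrow> \<psi> u \<inter> \<psi> x = {})"
proof -
  have Kl: "K \<in> lmeasurable" using K by (intro lmeasurable_in_interval)
  have cw: "c w \<in> sets lebesgue" "c w \<in> lmeasurable" if "w \<in> W" for w
    using unit_setD[OF c[rule_format, OF that]] by (auto intro: lmeasurable_in_interval)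
  have "K \<noteq> {}" using K(3) k by auto
  then have "0 < m" using K(2) by fastforce
  then have "k - k / m = k * (m - 1) / m" by (simp add: field_simps)
  have "\<forall>w\<in>W. \<exists>Uw. (\<forall>p<R. Uw p \<in> sets lebesgue \<and> Uw p \<subseteq> K \<and> measure lebesgue (Uw p) = \<tau> p
              \<and> (odd p \<longrightarrow> Uw p \<subseteq> c w) \<and> (even p \<longrightarrow> Uw p \<inter> c w = {}))
           \<and> disjoint_family_on Uw {..<R}"
  proof
    fix w assume w: "w \<in> W"
    have "measure lebesgue (K - c w) = measure lebesgue (K - (K \<inter> c w))" by (simp add: Diff_Int)
    also have "\<dots> = k - k / m"
      using KS w K(3) Kl cw[OF w] by (subst measure_Diff) (auto simp: fmeasurable_def)
    also have "\<dots> = k * (m - 1) / m" using k K(2) \<open>k - k / m = k * (m - 1) / m\<close> by simp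
    finally have "measure lebesgue (K - c w) = k * (m - 1) / m" .
    then show "\<exists>Uw. (\<forall>p<R. Uw p \<in> sets lebesgue \<and> Uw p \<subseteq> K \<and> measure lebesgue (Uw p) = \<tau> p
              \<and> (odd p \<longrightarrow> Uw p \<subseteq> c w) \<and> (even p \<longrightarrow> Uw p \<inter> c w = {}))
           \<and> disjoint_family_on Uw {..<R}"
      using KS w \<tau> by (intro parity_strips[OF K(1) bounded_subset[OF bounded_Ico K(2)] cw(1)[OF w]]) auto
  qed
  then obtain U where U: "\<forall>w\<in>W. (\<forall>p<R. U w p \<in> sets lebesgue \<and> U w p \<subseteq> K \<and> measure lebesgue (U w p) = \<tau> p
              \<and> (odd p \<longrightarrow> U w p \<subseteq> c w) \<and> (even p \<longrightarrow> U w p \<inter> c w = {}))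
           \<and> disjoint_family_on (U w) {..<R}"
    by metis
  have "finite (W \<times> {..<R})" "\<forall>j\<in>W \<times> {..<R}. case_prod U j \<in> sets lebesgue" using W U by auto
  from uniform_fractional_coloring[OF G col k K(1) bounded_subset[OF bounded_Ico K(2)] K(3) this]
  obtain \<psi> where \<psi>: "\<forall>v\<in>V. \<psi> v \<in> sets lebesgue \<and> \<psi> v \<subseteq> K \<and> measure lebesgue (\<psi> v) = 1
      \<and> (\<forall>j\<in>W \<times> {..<R}. measure lebesgue (\<psi> v \<inter> case_prod U j) = measure lebesgue (K \<inter> case_prod U j) / k)"
    and proper: "\<forall>u\<in>V. \<forall>x\<in>V. E u x \<longrightarrow> \<psi> u \<inter> \<psi> x = {}"
    by blast
  have "measure lebesgue (\<psi> v \<inter> U w p) = \<tau> p / k" if "v \<in> V" "w \<in> W" "p < R" for v w p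
  proof -
    have "K \<inter> U w p = U w p" using U that(2,3) by blast
    then show ?thesis using \<psi> U that by fastforce
  qed
  then show ?thesis using U \<psi> proper by (intro exI[of _ U] exI[of _ \<psi>]) auto
qed


text \<open>Each layer set has room for a colour class: its measure is the layer share, which
  admissible weights bound below by one.\<close>
lemma layer_set_ample:
  fixes U :: "nat \<Rightarrow> real set" and \<tau> :: "nat \<Rightarrow> real"
  assumes \<tau>: "admissible_weights k \<epsilon> R \<tau>" and k: "0 < k" and \<epsilon>: "0 < \<epsilon>"
    and K: "K \<in> sets lebesgue" "K \<subseteq> {0..<k + \<epsilon>}" "measure lebesgue K = k"
    and U: "\<forall>p<R. U p \<in> sets lebesgue \<and> U p \<subseteq> K \<and> measure lebesgue (U p) = \<tau> p"
      "disjoint_family_on U {..<R}"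
    and \<Psi>: "\<Psi> \<in> sets lebesgue" "\<Psi> \<subseteq> K" "\<forall>p<R. measure lebesgue (\<Psi> \<inter> U p) = \<tau> p / k"
    and S: "unit_set (k + \<epsilon>) S" "measure lebesgue (K \<inter> S) = k / (k + \<epsilon>)"
    and i: "1 \<le> i" "i < R"
  shows "ample_set (k + \<epsilon>) (layer_set R U \<Psi> ({0..<k + \<epsilon>} - K) S i)"
proof -
  let ?Z = "{0..<k + \<epsilon>} - K"
  have Z: "?Z \<in> sets lebesgue" "bounded ?Z" "?Z \<inter> K = {}" using K(1) by auto
  note measure = layer_set_measure[OF U bounded_subset[OF bounded_Ico K(2)] \<Psi> Z unit_setD(1)[OF S(1)] i(2)]
  have "measure lebesgue (layer_set R U \<Psi> ?Z S i) = layer_share k \<epsilon> R \<tau> i"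
    using measure(2) spare_room_measure[OF K S k \<epsilon>] unfolding layer_share_def by simp
  then have "1 \<le> measure lebesgue (layer_set R U \<Psi> ?Z S i)"
    using \<tau> i unfolding admissible_weights_def by simp
  moreover have "layer_set R U \<Psi> ?Z S i \<subseteq> {0..<k + \<epsilon>}"
    using layer_set_subset[of R U K \<Psi> ?Z S i] U(1) \<Psi>(2) K(2) by blast
  ultimately show ?thesis using measure(1) unfolding ample_set_def by simp
qed

lemma layer_colour_sets_exist:
  fixes c :: "'a \<Rightarrow> real set" and \<tau> :: "nat \<Rightarrow> real"
  assumes G: "graph V E" and W: "W \<subseteq> V" and col: "frac_colorable V E k"
    and k: "0 < k" and \<epsilon>: "0 < \<epsilon>" and R: "2 \<le> R"
    and pre: "frac_precoloring W (k + \<epsilon>) c" and \<tau>: "admissible_weights k \<epsilon> R \<tau>"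
  shows "\<exists>L \<psi>. (\<forall>v\<in>V. ample_set (k + \<epsilon>) (\<psi> v))
     \<and> (\<forall>w\<in>W. \<forall>v\<in>V. \<forall>i. 1 \<le> i \<and> i < R \<longrightarrow> ample_set (k + \<epsilon>) (L w i v))
     \<and> (\<forall>w\<in>W. \<forall>x. c w \<inter> L w 1 x = {})
     \<and> (\<forall>w\<in>W. \<forall>u x i. E u x \<and> 1 \<le> i \<and> i + 1 < R \<longrightarrow> L w i u \<inter> L w (i + 1) x = {})
     \<and> (\<forall>w\<in>W. \<forall>u x. E u x \<longrightarrow> L w (R - 1) u \<inter> \<psi> x = {})
     \<and> (\<forall>u x. E u x \<longrightarrow> \<psi> u \<inter> \<psi> x = {})"
proof -
  have finW: "finite W" using G W unfolding graph_def by (auto intro: finite_subset)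
  have c: "\<forall>w\<in>W. unit_set (k + \<epsilon>) (c w)" using pre unfolding frac_precoloring_def .
  have edges: "E u x \<Longrightarrow> u \<in> V \<and> x \<in> V" for u x using G unfolding graph_def by blast
  obtain K where K: "K \<in> sets lebesgue" "K \<subseteq> {0..<k + \<epsilon>}" "measure lebesgue K = k"
    and KS: "\<forall>w\<in>W. measure lebesgue (K \<inter> c w) = k / (k + \<epsilon>)"
    using base_region[OF finW c k] \<epsilon> by auto
  have budgets: "\<forall>p. 0 \<le> \<tau> p" "(\<Sum>p\<in>{p. p < R \<and> odd p}. \<tau> p) \<le> k / (k + \<epsilon>)"
      "(\<Sum>p\<in>{p. p < R \<and> even p}. \<tau> p) \<le> k * (k + \<epsilon> - 1) / (k + \<epsilon>)"
    using \<tau> unfolding admissible_weights_def by blast+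
  obtain U \<psi> where
      U_all: "\<forall>w\<in>W. (\<forall>p<R. U w p \<in> sets lebesgue \<and> U w p \<subseteq> K \<and> measure lebesgue (U w p) = \<tau> p
              \<and> (odd p \<longrightarrow> U w p \<subseteq> c w) \<and> (even p \<longrightarrow> U w p \<inter> c w = {}))
           \<and> disjoint_family_on (U w) {..<R}"
    and \<psi>_all: "\<forall>v\<in>V. \<psi> v \<in> sets lebesgue \<and> \<psi> v \<subseteq> K \<and> measure lebesgue (\<psi> v) = 1
           \<and> (\<forall>w\<in>W. \<forall>p<R. measure lebesgue (\<psi> v \<inter> U w p) = \<tau> p / k)"
    and proper_all: "\<forall>u\<in>V. \<forall>x\<in>V. E u x \<longrightarrow> \<psi> u \<inter> \<psi> x = {}"
    using strips_and_uniform_coloring[OF G col finW k K c KS budgets]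
    by (elim exE conjE) (rule that; assumption)
  have U: "\<forall>p<R. U w p \<in> sets lebesgue \<and> U w p \<subseteq> K \<and> measure lebesgue (U w p) = \<tau> p"
      "\<forall>p<R. even p \<longrightarrow> U w p \<inter> c w = {}" "disjoint_family_on (U w) {..<R}" if "w \<in> W" for w
    using U_all that by auto
  have \<psi>: "\<psi> v \<in> sets lebesgue" "\<psi> v \<subseteq> K" "measure lebesgue (\<psi> v) = 1"
      "\<forall>w\<in>W. \<forall>p<R. measure lebesgue (\<psi> v \<inter> U w p) = \<tau> p / k" if "v \<in> V" for v
    using \<psi>_all that by auto
  have proper: "\<psi> u \<inter> \<psi> x = {}" if "E u x" for u x using proper_all edges[OF that] that by blast
  define Z where "Z = {0..<k + \<epsilon>} - K"
  have ZK: "Z \<inter> K = {}" unfolding Z_def by blast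
  define L where "L w i v = layer_set R (U w) (\<psi> v) Z (c w) i" for w i v
  have "ample_set (k + \<epsilon>) (L w i v)" if "w \<in> W" "v \<in> V" "1 \<le> i" "i < R" for w i v
    unfolding L_def Z_def using c KS that
    by (intro layer_set_ample[OF \<tau> k \<epsilon> K U(1,3) \<psi>(1,2)]) (auto simp: \<psi>(4))
  moreover have "ample_set (k + \<epsilon>) (\<psi> v)" if "v \<in> V" for v
    using \<psi>[OF that] K(2) unfolding ample_set_def by auto
  moreover have "c w \<inter> L w 1 x = {}" if "w \<in> W" for w x
    unfolding L_def using R by (intro layer_set_first U(2) that) auto
  moreover have "L w i u \<inter> L w (i + 1) x = {}" if "w \<in> W" "E u x" "1 \<le> i" "i + 1 < R" for w u x i
    unfolding L_def using U(1)[OF that(1)] that(3,4)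
    by (intro layer_sets_consecutive[OF U(3)[OF that(1)] _ ZK proper[OF that(2)]]) auto
  moreover have "L w (R - 1) u \<inter> \<psi> x = {}" if "w \<in> W" "E u x" for w u x
    unfolding L_def using \<psi>(2) edges[OF that(2)]
    by (intro layer_set_last[OF proper[OF that(2)] _ ZK]) auto
  ultimately show ?thesis using proper by blast
qed

subsection \<open>Extension along layers\<close>

lemma relpowp_symmetric:
  assumes "\<forall>u v. E u v \<longrightarrow> E v u"
  shows "(E ^^ n) x y \<Longrightarrow> (E ^^ n) y x"
proof (induction n arbitrary: x y)
  case 0
  then show ?case by (auto elim: relpowp_0_E)
next
  case (Suc n)
  then obtain z where "(E ^^ n) x z" "E z y" by (elim relpowp_Suc_E)
  then have "(E ^^ n) z x" "E y z" using Suc.IH assms by blast+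
  then show ?case by (rule relpowp_Suc_I2[rotated])
qed

definition hop_distance :: "('a \<Rightarrow> 'a \<Rightarrow> bool) \<Rightarrow> 'a \<Rightarrow> 'a \<Rightarrow> nat" where
  "hop_distance E w v = (LEAST n. (E ^^ n) w v)"

lemma hop_distance_walk:
  assumes "(E ^^ n) w v"
  shows "(E ^^ hop_distance E w v) w v" "hop_distance E w v \<le> n"
  using assms unfolding hop_distance_def by (auto intro: LeastI Least_le)

locale layered_colour_sets =
  fixes V :: "'a set" and E :: "'a \<Rightarrow> 'a \<Rightarrow> bool" and W :: "'a set" and R :: nat and m :: real
    and c :: "'a \<Rightarrow> real set" and L :: "'a \<Rightarrow> nat \<Rightarrow> 'a \<Rightarrow> real set" and \<psi> :: "'a \<Rightarrow> real set"
  assumes graph: "graph V E" and W_sub: "W \<subseteq> V" and R: "2 \<le> R"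
    and far: "pairwise_far E W (2 * R)"
    and no_layer_edge: "\<And>w u x i. w \<in> W \<Longrightarrow> (E ^^ i) w u \<Longrightarrow> (E ^^ i) w x \<Longrightarrow> E u x \<Longrightarrow> R \<le> i"
    and precoloring: "frac_precoloring W m c"
    and \<psi>_ample: "\<And>v. v \<in> V \<Longrightarrow> ample_set m (\<psi> v)"
    and L_ample: "\<And>w i v. w \<in> W \<Longrightarrow> v \<in> V \<Longrightarrow> 1 \<le> i \<Longrightarrow> i < R \<Longrightarrow> ample_set m (L w i v)"
    and first_layer: "\<And>w x. w \<in> W \<Longrightarrow> c w \<inter> L w 1 x = {}"
    and consecutive_layers:
      "\<And>w u x i. w \<in> W \<Longrightarrow> E u x \<Longrightarrow> 1 \<le> i \<Longrightarrow> i + 1 < R \<Longrightarrow> L w i u \<inter> L w (i + 1) x = {}"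
    and last_layer: "\<And>w u x. w \<in> W \<Longrightarrow> E u x \<Longrightarrow> L w (R - 1) u \<inter> \<psi> x = {}"
    and \<psi>_proper: "\<And>u x. E u x \<Longrightarrow> \<psi> u \<inter> \<psi> x = {}"
begin

lemma symmetric: "E u x \<Longrightarrow> E x u"
  using graph unfolding graph_def by blast

definition near :: "'a \<Rightarrow> 'a \<Rightarrow> bool" where
  "near w v \<longleftrightarrow> (\<exists>n<R. (E ^^ n) w v)"

definition colour :: "'a \<Rightarrow> real set" where
  "colour v = (if v \<in> W then c v
     else if \<exists>w\<in>W. near w v then L (SOME w. w \<in> W \<and> near w v) (hop_distance E (SOME w. w \<in> W \<and> near w v) v) v
     else \<psi> v)"

text \<open>Precoloured vertices are \<open>2 * R\<close> apart, so at most one of them is near any vertex.\<close>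
lemma near_unique:
  assumes "w \<in> W" "w' \<in> W" "(E ^^ a) w v" "(E ^^ b) w' v" "a + b < 2 * R"
  shows "w = w'"
proof (rule ccontr)
  assume "w \<noteq> w'"
  have "\<forall>u v. E u v \<longrightarrow> E v u" using symmetric by blast
  from relpowp_symmetric[OF this assms(4)] have "(E ^^ b) v w'" .
  then have "(E ^^ (a + b)) w w'" using assms(3) unfolding relpowp_add by blast
  then show False using far assms \<open>w \<noteq> w'\<close> unfolding pairwise_far_def by blast
qed

lemma colour_near:
  assumes w: "w \<in> W" "near w v" and v: "v \<notin> W"
  shows "colour v = L w (hop_distance E w v) v" "1 \<le> hop_distance E w v" "hop_distance E w v < R"
    "(E ^^ hop_distance E w v) w v"
proof -
  have "(SOME w. w \<in> W \<and> near w v) \<in> W \<and> near (SOME w. w \<in> W \<and> near w v) v"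
    using someI[of "\<lambda>w. w \<in> W \<and> near w v" w] w by blast
  moreover have "w' = w" if w': "w' \<in> W" "near w' v" for w'
  proof -
    obtain a b where "a < R" "(E ^^ a) w' v" "b < R" "(E ^^ b) w v"
      using w'(2) w(2) unfolding near_def by blast
    then show ?thesis by (intro near_unique[OF w'(1) w(1)]) auto
  qed
  ultimately have "(SOME w. w \<in> W \<and> near w v) = w" by blast
  then show "colour v = L w (hop_distance E w v) v" unfolding colour_def using w v by auto
  obtain n where n: "n < R" "(E ^^ n) w v" using w unfolding near_def by blast
  show "(E ^^ hop_distance E w v) w v" "hop_distance E w v < R"
    using hop_distance_walk[OF n(2)] n(1) by auto
  show "1 \<le> hop_distance E w v"
    using hop_distance_walk(1)[OF n(2)] v w(1) by (cases "hop_distance E w v") auto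
qed

lemma colour_precoloured: "v \<in> W \<Longrightarrow> colour v = c v"
  unfolding colour_def by simp

lemma colour_far: "v \<notin> W \<Longrightarrow> \<not> (\<exists>w\<in>W. near w v) \<Longrightarrow> colour v = \<psi> v"
  unfolding colour_def by simp

lemma colour_ample:
  assumes "v \<in> V" "v \<notin> W"
  shows "ample_set m (colour v)"
proof (cases "\<exists>w\<in>W. near w v")
  case True
  then obtain w where "w \<in> W" "near w v" by blast
  then show ?thesis using colour_near[of w v] L_ample assms by simp
qed (use colour_far \<psi>_ample assms in simp)

text \<open>Neighbours of a precoloured vertex lie on its first layer.\<close>
lemma colour_next_to_precoloured:
  assumes w: "w \<in> W" and wx: "E w x"
  shows "c w \<inter> colour x = {}"
proof -
  have "(E ^^ 1) w x" using wx by (simp only: relpowp_1)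
  moreover have "w \<noteq> x" using graph wx unfolding graph_def by blast
  have one: "1 < R" "1 < 2 * R" using R by auto
  have "x \<notin> W"
  proof
    assume "x \<in> W"
    then show False using far w \<open>w \<noteq> x\<close> \<open>(E ^^ 1) w x\<close> one(2) unfolding pairwise_far_def by blast
  qed
  moreover have "near w x" unfolding near_def using \<open>(E ^^ 1) w x\<close> one(1) by blast
  ultimately have x: "x \<notin> W" "near w x" by blast+
  then have "hop_distance E w x = 1"
    using colour_near(2)[OF w x(2) x(1)] hop_distance_walk(2)[OF \<open>(E ^^ 1) w x\<close>] by simp
  then show ?thesis using colour_near(1)[OF w x(2) x(1)] first_layer[OF w] by simp
qed

text \<open>An edge leaving the neighbourhood of a precoloured vertex: the far end is either on the
  adjacent layer of the same vertex, or outside every neighbourhood and then the near end is on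
  the last layer.\<close>
lemma colour_edge_near:
  assumes ux: "E u x" "u \<notin> W" "x \<notin> W" and w: "w \<in> W" "near w u"
  shows "colour u \<inter> colour x = {}"
proof -
  define i where "i = hop_distance E w u"
  have u: "colour u = L w i u" "1 \<le> i" "i < R" "(E ^^ i) w u"
    using colour_near[OF w ux(2)] unfolding i_def by auto
  have wx: "(E ^^ (i + 1)) w x" using u(4) ux(1) by auto
  show ?thesis
  proof (cases "\<exists>w'\<in>W. near w' x")
    case True
    then obtain w' b where w': "w' \<in> W" "b < R" "(E ^^ b) w' x" unfolding near_def by blast
    then have "w' = w" using near_unique[OF w(1) w'(1) wx w'(3)] u(3) by simp
    then have x_near: "near w x" using w' unfolding near_def by blast
    define j where "j = hop_distance E w x"
    have x: "colour x = L w j x" "1 \<le> j" "j < R" "(E ^^ j) w x"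
      using colour_near[OF w(1) x_near ux(3)] unfolding j_def by auto
    have "j \<le> i + 1" using hop_distance_walk(2)[OF wx] unfolding j_def .
    moreover have "i \<le> j + 1"
    proof -
      have "(E ^^ (j + 1)) w u" using x(4) symmetric[OF ux(1)] by auto
      then show ?thesis unfolding i_def by (rule hop_distance_walk(2))
    qed
    moreover have "j \<noteq> i" using no_layer_edge[OF w(1) u(4) _ ux(1)] x(4) u(3) by auto
    ultimately consider "j = i + 1" | "i = j + 1" by linarith
    then show ?thesis
    proof cases
      case 1
      then show ?thesis using consecutive_layers[OF w(1) ux(1) u(2)] u(1) x(1,3) by simp
    next
      case 2
      then show ?thesis
        using consecutive_layers[OF w(1) symmetric[OF ux(1)] x(2)] u(1,3) x(1) by (simp add: Int_commute)
    qed
  next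
    case False
    then have "\<not> i + 1 < R" using wx w(1) unfolding near_def by blast
    then have "i = R - 1" using u(3) by simp
    then show ?thesis using colour_far[OF ux(3) False] last_layer[OF w(1) ux(1)] u(1) by simp
  qed
qed

lemma colour_proper:
  assumes ux: "E u x"
  shows "colour u \<inter> colour x = {}"
proof (cases "u \<in> W \<or> x \<in> W")
  case True
  then show ?thesis
    using colour_next_to_precoloured[OF _ ux] colour_next_to_precoloured[OF _ symmetric[OF ux]]
      colour_precoloured by (auto simp: Int_commute)
next
  case False
  then have u: "u \<notin> W" and x: "x \<notin> W" by auto
  consider "\<exists>w\<in>W. near w u" | "\<exists>w\<in>W. near w x" | "\<not> (\<exists>w\<in>W. near w u)" "\<not> (\<exists>w\<in>W. near w x)"
    by blast
  then show ?thesis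
  proof cases
    case 1
    then show ?thesis using colour_edge_near[OF ux u x] by blast
  next
    case 2
    then show ?thesis using colour_edge_near[OF symmetric[OF ux] x u] by blast
  next
    case 3
    then show ?thesis using colour_far u x \<psi>_proper[OF ux] by simp
  qed
qed

text \<open>Shrinking every offered set to measure one extends the precolouring.\<close>
theorem extension: "precoloring_extends V E m W c"
proof -
  define c' where "c' v = (if v \<in> W then c v else SOME T. T \<subseteq> colour v \<and> unit_set m T)" for v
  have "c' v \<subseteq> colour v \<and> unit_set m (c' v)" if "v \<in> V" for v
  proof (cases "v \<in> W")
    case True
    then show ?thesis using precoloring colour_precoloured unfolding c'_def frac_precoloring_def by auto
  next
    case False
    then show ?thesis
      using someI_ex[OF ample_set_unit_subset[OF colour_ample[OF that False]]] unfolding c'_def by auto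
  qed
  then have "frac_coloring V E m c'"
    using colour_proper unfolding frac_coloring_def by blast
  then show ?thesis unfolding precoloring_extends_def c'_def by auto
qed

end


theorem mainTheorem6:
  fixes V W :: "'a set" and E :: "'a \<Rightarrow> 'a \<Rightarrow> bool"
    and d :: nat and k \<epsilon> :: real and c :: "'a \<Rightarrow> real set"
  assumes "d > 0" and "4 dvd d"
    and "k \<in> \<rat>" and "\<epsilon> > 0"
    and "2 \<le> k" and "k < 2 + 1 / (2 * real (d div 4) - 1)"
    and "\<epsilon> * (\<Sum>j<d div 4 - 1. (k - 1) ^ (2 * j + 2))
           + \<epsilon> * ((k - 1 + \<epsilon>) / (k + \<epsilon>)) \<ge> 1 / (k + \<epsilon>)"
    and "graph V E" and "frac_colorable V E k"
    and "W \<subseteq> V" and "pairwise_far E W d"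
    and "frac_precoloring W (k + \<epsilon>) c"
  shows "precoloring_extends V E (k + \<epsilon>) W c"
proof -
  define D where "D = d div 4"
  have D: "d = 2 * (2 * D)" "1 \<le> D" "2 \<le> 2 * D" using assms(1,2) by (auto simp: D_def)
  have k: "0 < k" using assms(5) by simp
  obtain \<tau> where \<tau>: "admissible_weights k \<epsilon> (2 * D) \<tau>"
    using admissible_weights_exist[OF assms(5,4) D(2) assms(7)[folded D_def]] by blast
  obtain L \<psi> where L\<psi>: "\<forall>v\<in>V. ample_set (k + \<epsilon>) (\<psi> v)"
      "\<forall>w\<in>W. \<forall>v\<in>V. \<forall>i. 1 \<le> i \<and> i < 2 * D \<longrightarrow> ample_set (k + \<epsilon>) (L w i v)"
      "\<forall>w\<in>W. \<forall>x. c w \<inter> L w 1 x = {}"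
      "\<forall>w\<in>W. \<forall>u x i. E u x \<and> 1 \<le> i \<and> i + 1 < 2 * D \<longrightarrow> L w i u \<inter> L w (i + 1) x = {}"
      "\<forall>w\<in>W. \<forall>u x. E u x \<longrightarrow> L w (2 * D - 1) u \<inter> \<psi> x = {}"
      "\<forall>u x. E u x \<longrightarrow> \<psi> u \<inter> \<psi> x = {}"
    using layer_colour_sets_exist[OF assms(8,10,9) k assms(4) D(3) assms(12) \<tau>]
    by (elim exE conjE) (rule that; assumption)
  have no_layer_edge: "2 * D \<le> i" if "(E ^^ i) w u" "(E ^^ i) w x" "E u x" for w u x i
    using no_layer_edge_below[OF assms(8,9) _ D(2) assms(6)[folded D_def] that] k by simp
  interpret layered_colour_sets V E W "2 * D" "k + \<epsilon>" c L \<psi>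
    using assms(8,10,11,12) D L\<psi> no_layer_edge by unfold_locales auto
  show ?thesis by (rule extension)
qed

end
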